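(* Let $\mathcal{C}\subset(\mathbb{C}^2)^{\otimes n}$ be a stabilizer code on $n$ qubits encoding one logical qubit, with minimal set of stabilizer generators $g_1,\dots,g_{n-1}$. For $\mathbf{s}\in\{0,1\}^{n-1}$ let $\Pi_{\mathbf{s}}=\prod_{i=1}^{n-1}\frac{\mathbb{I}+(-1)^{s_i}g_i}{2}$ (so $\Pi_{\mathbf{0}}$ is the projector onto the code space), and for each $\mathbf{s}$ let $C_{\mathbf{s}}$ be any Pauli operator with $\Pi_{\mathbf{s}}C_{\mathbf{s}}=C_{\mathbf{s}}\Pi_{\mathbf{0}}$ (a recovery operation). Let $U$ be a unitary on the $n$ physical qubits. Assume: (1) every element of the stabilizer group has even Pauli weight; (2) the code is CSS and its $X$- and $Z$-distances $d_x$, $d_z$ are both odd; (3) $U$ commutes with the antiunitary time-reversal operator $\mathcal{T}=\mathcal{K}\prod_{j=1}^n(iY_j)$, where $\mathcal{K}$ denotes complex conjugation in the computational basis. Then for every $\mathbf{s}$, $$C_{\mathbf{s}}\Pi_{\mathbf{s}}U\Pi_{\mathbf{0}}=\sqrt{p(\mathbf{s})}\,U_{L,\mathbf{s}}\Pi_{\mathbf{0}},$$ where $p(\mathbf{s})$ is a probability distribution over syndromes $\mathbf{s}\in\{0,1\}^{n-1}$ and each $U_{L,\mathbf{s}}$ is a unitary on the logical subspace (code space).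
   Context: The Pauli weight $|P|$ of a Pauli string $P$ is the number of tensor factors that are not the identity. A stabilizer code is CSS if its stabilizer group is generated by operators that are each tensor products of only $X$ and $I$, or only of $Z$ and $I$; $d_x$ and $d_z$ are the minimal weights of nontrivial logical $X$-type and $Z$-type operators. $Y_j$ denotes the Pauli $Y$ on qubit $j$. A "unitary on the logical subspace" means an operator on the code space $\Pi_{\mathbf{0}}(\mathbb{C}^2)^{\otimes n}$ that is unitary there. *)

theory Defs
  imports "Jordan_Normal_Form.Matrix"
begin

datatype pauli1 = PI | PX | PY | PZ

fun pauli1_entry :: "pauli1 \<Rightarrow> nat \<Rightarrow> nat \<Rightarrow> complex" where
  "pauli1_entry PI a b = (if a = b then 1 else 0)"
| "pauli1_entry PX a b = (if a \<noteq> b then 1 else 0)"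
| "pauli1_entry PY a b = (if a = b then 0 else if a = 0 then - \<i> else \<i>)"
| "pauli1_entry PZ a b = (if a = b then (if a = 0 then 1 else -1) else 0)"

definition qbit :: "nat \<Rightarrow> nat \<Rightarrow> nat" where
  "qbit j a = a div 2 ^ j mod 2"

definition pauli_mat :: "nat \<Rightarrow> (nat \<Rightarrow> pauli1) \<Rightarrow> complex mat" where
  "pauli_mat n p = mat (2 ^ n) (2 ^ n)
     (\<lambda>(a, b). \<Prod>j<n. pauli1_entry (p j) (qbit j a) (qbit j b))"

definition phases :: "complex set" where
  "phases = {1, -1, \<i>, - \<i>}"

definition pauli_ops :: "nat \<Rightarrow> complex mat set" where
  "pauli_ops n = {c \<cdot>\<^sub>m pauli_mat n p | c p. c \<in> phases}"

definition pauli_weight :: "nat \<Rightarrow> (nat \<Rightarrow> pauli1) \<Rightarrow> nat" where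
  "pauli_weight n p = card {j. j < n \<and> p j \<noteq> PI}"

definition x_type :: "nat \<Rightarrow> (nat \<Rightarrow> pauli1) \<Rightarrow> bool" where
  "x_type n p = (\<forall>j<n. p j \<in> {PI, PX})"

definition z_type :: "nat \<Rightarrow> (nat \<Rightarrow> pauli1) \<Rightarrow> bool" where
  "z_type n p = (\<forall>j<n. p j \<in> {PI, PZ})"

text \<open>Group generated by a set H of 2^n x 2^n matrices (closure of the identity under
  left multiplication by generators; for Pauli operators, which have finite order,
  this is the generated group).\<close>
inductive_set gen_group :: "nat \<Rightarrow> complex mat set \<Rightarrow> complex mat set"
  for n :: nat and H :: "complex mat set" where
  gen_one: "1\<^sub>m (2 ^ n) \<in> gen_group n H"
| gen_mult: "h \<in> H \<Longrightarrow> M \<in> gen_group n H \<Longrightarrow> h * M \<in> gen_group n H"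

definition stab_group :: "nat \<Rightarrow> nat \<Rightarrow> (nat \<Rightarrow> complex mat) \<Rightarrow> complex mat set" where
  "stab_group n m g = gen_group n (g ` {..<m})"

definition prod_subset :: "nat \<Rightarrow> nat \<Rightarrow> (nat \<Rightarrow> complex mat) \<Rightarrow> nat set \<Rightarrow> complex mat" where
  "prod_subset n m g A = foldr (\<lambda>i M. (if i \<in> A then g i else 1\<^sub>m (2 ^ n)) * M) [0..<m] (1\<^sub>m (2 ^ n))"

definition stabilizer_generators :: "nat \<Rightarrow> nat \<Rightarrow> (nat \<Rightarrow> complex mat) \<Rightarrow> bool" where
  "stabilizer_generators n m g \<longleftrightarrow>
     (\<forall>i<m. g i \<in> pauli_ops n) \<and>
     (\<forall>i<m. \<forall>j<m. g i * g j = g j * g i) \<and>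
     - 1\<^sub>m (2 ^ n) \<notin> stab_group n m g \<and>
     (\<forall>A \<subseteq> {..<m}. prod_subset n m g A = 1\<^sub>m (2 ^ n) \<longrightarrow> A = {})"

definition is_css :: "nat \<Rightarrow> complex mat set \<Rightarrow> bool" where
  "is_css n S \<longleftrightarrow> (\<exists>H. (\<forall>h\<in>H. \<exists>c p. c \<in> phases \<and> h = c \<cdot>\<^sub>m pauli_mat n p \<and>
                                          (x_type n p \<or> z_type n p)) \<and>
                       gen_group n H = S)"

definition nontrivial_logical :: "nat \<Rightarrow> complex mat set \<Rightarrow> (nat \<Rightarrow> pauli1) \<Rightarrow> bool" where
  "nontrivial_logical n S p \<longleftrightarrow>
     (\<forall>M\<in>S. M * pauli_mat n p = pauli_mat n p * M) \<and>
     (\<forall>c\<in>phases. c \<cdot>\<^sub>m pauli_mat n p \<notin> S)"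

definition dist_x :: "nat \<Rightarrow> complex mat set \<Rightarrow> nat" where
  "dist_x n S = (LEAST w. \<exists>p. x_type n p \<and> nontrivial_logical n S p \<and> pauli_weight n p = w)"

definition dist_z :: "nat \<Rightarrow> complex mat set \<Rightarrow> nat" where
  "dist_z n S = (LEAST w. \<exists>p. z_type n p \<and> nontrivial_logical n S p \<and> pauli_weight n p = w)"

definition syndromes :: "nat \<Rightarrow> bool list set" where
  "syndromes m = {s. length s = m}"

definition syndrome_proj :: "nat \<Rightarrow> nat \<Rightarrow> (nat \<Rightarrow> complex mat) \<Rightarrow> bool list \<Rightarrow> complex mat" where
  "syndrome_proj n m g s = foldr (\<lambda>i M.
      ((1 / 2 :: complex) \<cdot>\<^sub>m (1\<^sub>m (2 ^ n) + (if s ! i then -1 else 1 :: complex) \<cdot>\<^sub>m g i)) * M)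
      [0..<m] (1\<^sub>m (2 ^ n))"

definition adj :: "complex mat \<Rightarrow> complex mat" where
  "adj M = mat (dim_col M) (dim_row M) (\<lambda>(i, j). cnj (M $$ (j, i)))"

definition unitary_mat :: "nat \<Rightarrow> complex mat \<Rightarrow> bool" where
  "unitary_mat N U \<longleftrightarrow> U \<in> carrier_mat N N \<and> adj U * U = 1\<^sub>m N \<and> U * adj U = 1\<^sub>m N"

text \<open>V restricted to the code space (projector P) is a unitary on it: V maps the code space
  into itself and is isometric there (hence, finite dimension, unitary on it).\<close>
definition unitary_on_code :: "nat \<Rightarrow> complex mat \<Rightarrow> complex mat \<Rightarrow> bool" where
  "unitary_on_code N P V \<longleftrightarrow> V \<in> carrier_mat N N \<and>
     P * (V * P) = V * P \<and> adj (V * P) * (V * P) = P"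

definition vec_cnj :: "complex vec \<Rightarrow> complex vec" where
  "vec_cnj v = vec (dim_vec v) (\<lambda>i. cnj (v $ i))"

definition iY_all :: "nat \<Rightarrow> complex mat" where
  "iY_all n = (\<i> ^ n) \<cdot>\<^sub>m pauli_mat n (\<lambda>_. PY)"

definition time_rev :: "nat \<Rightarrow> complex vec \<Rightarrow> complex vec" where
  "time_rev n v = vec_cnj (iY_all n *\<^sub>v v)"

end

theory Submission
  imports Defs
begin

text \<open>
  Complex conjugation followed by \<open>(iY)\<^sup>\<otimes>\<^sup>n\<close> is an antiunitary \<open>T\<close> with \<open>T\<^sup>2 = (-1)\<^sup>n\<close>. Stabilizers of
  even weight commute with \<open>T\<close>, and so do all syndrome projectors. For a CSS code with even
  stabilizer weights, \<open>X\<^sup>\<otimes>\<^sup>n\<close> and \<open>Z\<^sup>\<otimes>\<^sup>n\<close> commute with the stabilizer group; odd \<open>d\<^sub>z\<close> and \<open>d\<^sub>x\<close> make them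
  nontrivial logicals, and since a single encoded qubit admits no two independent commuting logicals,
  \<open>Z\<^sup>\<otimes>\<^sup>n\<close> times a minimal Z-logical of odd weight is an even-weight stabilizer, forcing \<open>n\<close> odd.
  Then \<open>T\<^sup>2 = -1\<close>, and by Kramers' theorem every \<open>T\<close>-symmetric Hermitian operator on the
  two-dimensional code space is a real multiple of \<open>\<Pi>\<^sub>0\<close>; in particular
  \<open>\<Pi>\<^sub>0 U\<^sup>\<dagger> \<Pi>\<^sub>s U \<Pi>\<^sub>0 = p(s) \<Pi>\<^sub>0\<close>. Hence \<open>C\<^sub>s \<Pi>\<^sub>s U \<Pi>\<^sub>0\<close> is \<open>\<surd>p(s)\<close> times an isometry of the code space,
  and the \<open>p(s)\<close> sum to one because the \<open>\<Pi>\<^sub>s\<close> resolve the identity.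
\<close>

definition trace :: "complex mat \<Rightarrow> complex" where
  "trace M = (\<Sum>i<dim_row M. M $$ (i, i))"

definition conj_mat :: "complex mat \<Rightarrow> complex mat" where
  "conj_mat M = mat (dim_row M) (dim_col M) (\<lambda>(i, j). cnj (M $$ (i, j)))"

lemma smult_one_mat [simp]: "(1::'a::monoid_mult) \<cdot>\<^sub>m A = A"
  by (intro eq_matI) auto

lemma smult_smult_mat [simp]: "(a::'a::semigroup_mult) \<cdot>\<^sub>m (b \<cdot>\<^sub>m A) = (a * b) \<cdot>\<^sub>m A"
  by (intro eq_matI) (auto simp: mult.assoc)

lemma adj_carrier[simp]: "A \<in> carrier_mat nr nc \<Longrightarrow> adj A \<in> carrier_mat nc nr"
  unfolding adj_def by simp

lemma adj_dims[simp]: "dim_row (adj A) = dim_col A" "dim_col (adj A) = dim_row A"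
  unfolding adj_def by simp_all

lemma adj_index[simp]: "i < dim_col A \<Longrightarrow> j < dim_row A \<Longrightarrow> adj A $$ (i, j) = cnj (A $$ (j, i))"
  unfolding adj_def by simp

lemma adj_adj[simp]: "adj (adj A) = A"
  by (intro eq_matI) auto

lemma adj_mult: "A \<in> carrier_mat nr n \<Longrightarrow> B \<in> carrier_mat n nc \<Longrightarrow> adj (A * B) = adj B * adj A"
  by (intro eq_matI) (auto simp: scalar_prod_def intro!: sum.cong)

lemma adj_add: "A \<in> carrier_mat nr nc \<Longrightarrow> B \<in> carrier_mat nr nc \<Longrightarrow> adj (A + B) = adj A + adj B"
  by (intro eq_matI) auto

lemma adj_minus: "A \<in> carrier_mat nr nc \<Longrightarrow> B \<in> carrier_mat nr nc \<Longrightarrow> adj (A - B) = adj A - adj B"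
  by (intro eq_matI) auto

lemma adj_smult: "adj (c \<cdot>\<^sub>m A) = cnj c \<cdot>\<^sub>m adj A"
  by (intro eq_matI) auto

lemma adj_one[simp]: "adj (1\<^sub>m N) = 1\<^sub>m N"
  by (intro eq_matI) auto

lemma trace_add: "A \<in> carrier_mat N N \<Longrightarrow> B \<in> carrier_mat N N \<Longrightarrow> trace (A + B) = trace A + trace B"
  unfolding trace_def by (simp add: sum.distrib)

lemma trace_minus: "A \<in> carrier_mat N N \<Longrightarrow> B \<in> carrier_mat N N \<Longrightarrow> trace (A - B) = trace A - trace B"
  unfolding trace_def by (simp add: sum_subtractf)

lemma trace_smult: "A \<in> carrier_mat N N \<Longrightarrow> trace (c \<cdot>\<^sub>m A) = c * trace A"
  unfolding trace_def by (simp add: sum_distrib_left)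

lemma minus_zero_mat[simp]: "A \<in> carrier_mat nr nc \<Longrightarrow> A - 0\<^sub>m nr nc = (A :: 'a :: group_add mat)"
  by (intro eq_matI) auto

lemma cnj_mult_self: "cnj z * z = complex_of_real ((cmod z)\<^sup>2)"
  by (metis complex_norm_square mult.commute)

lemma trace_one[simp]: "trace (1\<^sub>m N) = of_nat N"
  unfolding trace_def by simp

lemma trace_mult_comm: assumes "A \<in> carrier_mat N M" "B \<in> carrier_mat M N" shows "trace (A * B) = trace (B * A)"
proof -
  have "trace (A * B) = (\<Sum>i<N. \<Sum>k<M. A $$ (i, k) * B $$ (k, i))"
    unfolding trace_def using assms by (simp add: scalar_prod_def lessThan_atLeast0)
  also have "\<dots> = (\<Sum>k<M. \<Sum>i<N. B $$ (k, i) * A $$ (i, k))"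
    by (subst sum.swap) (simp add: mult.commute)
  also have "\<dots> = trace (B * A)"
    unfolding trace_def using assms by (simp add: scalar_prod_def lessThan_atLeast0)
  finally show ?thesis .
qed

lemma trace_adj_mult_self: assumes "A \<in> carrier_mat N M"
  shows "trace (adj A * A) = of_real (\<Sum>i<M. \<Sum>k<N. (cmod (A $$ (k, i)))\<^sup>2)"
proof -
  have "trace (adj A * A) = (\<Sum>i<M. \<Sum>k<N. cnj (A $$ (k, i)) * A $$ (k, i))"
    unfolding trace_def using assms by (simp add: scalar_prod_def lessThan_atLeast0)
  also have "\<dots> = (\<Sum>i<M. \<Sum>k<N. of_real ((cmod (A $$ (k, i)))\<^sup>2))"
    by (intro sum.cong refl) (rule cnj_mult_self)
  finally show ?thesis by simp
qed

lemma trace_adj_mult_self_nonneg: assumes "A \<in> carrier_mat N M"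
  shows "\<exists>r\<ge>0. trace (adj A * A) = of_real r"
  using trace_adj_mult_self[OF assms] by (intro exI[of _ "\<Sum>i<M. \<Sum>k<N. (cmod (A $$ (k, i)))\<^sup>2"]) (auto intro!: sum_nonneg)

lemma trace_adj_mult_self_eq_0: assumes "A \<in> carrier_mat N M" "trace (adj A * A) = 0"
  shows "A = 0\<^sub>m N M"
proof (rule eq_matI)
  fix k i assume "k < dim_row (0\<^sub>m N M :: complex mat)" "i < dim_col (0\<^sub>m N M :: complex mat)"
  then have ki: "k < N" "i < M" by auto
  have "(\<Sum>i<M. \<Sum>k<N. (cmod (A $$ (k, i)))\<^sup>2) = 0"
    using assms(2) trace_adj_mult_self[OF assms(1)] by (metis of_real_eq_0_iff)
  then have "\<forall>i\<in>{..<M}. (\<Sum>k<N. (cmod (A $$ (k, i)))\<^sup>2) = 0"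
    by (subst (asm) sum_nonneg_eq_0_iff) (auto intro: sum_nonneg)
  then have "(\<Sum>k<N. (cmod (A $$ (k, i)))\<^sup>2) = 0" using ki by auto
  then have "\<forall>k\<in>{..<N}. (cmod (A $$ (k, i)))\<^sup>2 = 0"
    by (subst (asm) sum_nonneg_eq_0_iff) auto
  then show "A $$ (k, i) = 0\<^sub>m N M $$ (k, i)" using ki by auto
qed (use assms in auto)

lemma smult_mult_smult:
  "A \<in> carrier_mat N N \<Longrightarrow> B \<in> carrier_mat N N \<Longrightarrow> (a \<cdot>\<^sub>m A) * (b \<cdot>\<^sub>m B) = (a * b :: 'a :: comm_ring) \<cdot>\<^sub>m (A * B)"
  by (intro eq_matI) (auto simp: scalar_prod_def sum_distrib_left ac_simps intro!: sum.cong)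

lemma uminus_one_mat: "- 1\<^sub>m N = (-1 :: complex) \<cdot>\<^sub>m 1\<^sub>m N"
  by (intro eq_matI) auto

lemma one_mult_sq: "(1\<^sub>m N + M) * (1\<^sub>m N + M) = (2::complex) \<cdot>\<^sub>m (1\<^sub>m N + M)"
  if "M \<in> carrier_mat N N" "M * M = 1\<^sub>m N"
proof -
  have "(1\<^sub>m N + M) * (1\<^sub>m N + M) = 1\<^sub>m N * (1\<^sub>m N + M) + M * (1\<^sub>m N + M)"
    using that by (intro add_mult_distrib_mat) auto
  also have "M * (1\<^sub>m N + M) = M * 1\<^sub>m N + M * M"
    using that by (intro mult_add_distrib_mat) auto
  finally show ?thesis using that by (intro eq_matI) auto
qed

lemma dim_conj_mat[simp]: "dim_row (conj_mat A) = dim_row A" "dim_col (conj_mat A) = dim_col A"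
  unfolding conj_mat_def by simp_all

lemma conj_mat_carrier[simp]: "A \<in> carrier_mat nr nc \<Longrightarrow> conj_mat A \<in> carrier_mat nr nc"
  unfolding conj_mat_def by simp

lemma index_conj_mat[simp]: "i < dim_row A \<Longrightarrow> j < dim_col A \<Longrightarrow> conj_mat A $$ (i, j) = cnj (A $$ (i, j))"
  unfolding conj_mat_def by simp

lemma conj_mat_mult: "A \<in> carrier_mat nr k \<Longrightarrow> B \<in> carrier_mat k nc \<Longrightarrow> conj_mat (A * B) = conj_mat A * conj_mat B"
  by (intro eq_matI) (auto simp: scalar_prod_def)

lemma conj_mat_add: "A \<in> carrier_mat nr nc \<Longrightarrow> B \<in> carrier_mat nr nc \<Longrightarrow> conj_mat (A + B) = conj_mat A + conj_mat B"
  by (intro eq_matI) auto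

lemma conj_mat_smult: "conj_mat (c \<cdot>\<^sub>m A) = cnj c \<cdot>\<^sub>m conj_mat A"
  by (intro eq_matI) auto

lemma conj_mat_one[simp]: "conj_mat (1\<^sub>m N) = 1\<^sub>m N"
  by (intro eq_matI) auto

lemma eq_mat_by_mult_vec:
  assumes "(A :: 'a :: semiring_1 mat) \<in> carrier_mat nr nc" "B \<in> carrier_mat nr nc"
    "\<And>v. v \<in> carrier_vec nc \<Longrightarrow> A *\<^sub>v v = B *\<^sub>v v"
  shows "A = B"
proof (rule eq_matI)
  fix i j assume ij: "i < dim_row B" "j < dim_col B"
  have ij': "i < nr" "j < nc" using ij assms by auto
  have "(A *\<^sub>v unit_vec nc j) $ i = (B *\<^sub>v unit_vec nc j) $ i" using assms(3)[of "unit_vec nc j"] by simp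
  moreover have "(A *\<^sub>v unit_vec nc j) $ i = A $$ (i, j)" using assms(1) ij' by simp
  moreover have "(B *\<^sub>v unit_vec nc j) $ i = B $$ (i, j)" using assms(2) ij' by simp
  ultimately show "A $$ (i, j) = B $$ (i, j)" by simp
qed (use assms in auto)

definition orth_proj :: "nat \<Rightarrow> complex mat \<Rightarrow> bool" where
  "orth_proj N P \<longleftrightarrow> P \<in> carrier_mat N N \<and> adj P = P \<and> P * P = P"

lemma trace_orth_proj_nonneg: assumes "orth_proj N P" shows "\<exists>r\<ge>0. trace P = of_real r"
proof -
  have "trace P = trace (adj P * P)" using assms unfolding orth_proj_def by simp
  then show ?thesis using trace_adj_mult_self_nonneg[of P N N] assms unfolding orth_proj_def by auto
qed

lemma orth_proj_trace_0: assumes "orth_proj N P" "trace P = 0" shows "P = 0\<^sub>m N N"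
proof -
  have "trace (adj P * P) = 0" using assms unfolding orth_proj_def by simp
  then show ?thesis using trace_adj_mult_self_eq_0[of P N N] assms unfolding orth_proj_def by auto
qed

lemma orth_proj_diff: assumes "orth_proj N Q" "orth_proj N E" "Q * E = E" shows "orth_proj N (Q - E)"
proof -
  have c: "Q \<in> carrier_mat N N" "E \<in> carrier_mat N N" using assms unfolding orth_proj_def by auto
  have "E * Q = E"
  proof -
    have "E * Q = adj E * adj Q" using assms unfolding orth_proj_def by simp
    also have "\<dots> = adj (Q * E)" using c by (simp add: adj_mult)
    finally show ?thesis using assms unfolding orth_proj_def by simp
  qed
  moreover have "(Q - E) * (Q - E) = (Q - E) * Q - (Q - E) * E"
    using c by (intro mult_minus_distrib_mat[of _ N N]) auto
  moreover have "(Q - E) * Q = Q * Q - E * Q"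
    using c by (intro minus_mult_distrib_mat[of _ N N]) auto
  moreover have "(Q - E) * E = Q * E - E * E"
    using c by (intro minus_mult_distrib_mat[of _ N N]) auto
  moreover have "Q - E \<in> carrier_mat N N" using c by (simp add: minus_carrier_mat)
  ultimately have "(Q - E) * (Q - E) = Q - E"
    using assms c unfolding orth_proj_def by simp
  then show ?thesis using assms c unfolding orth_proj_def by (simp add: adj_minus minus_carrier_mat)
qed

definition mat_prodl :: "nat \<Rightarrow> (nat \<Rightarrow> complex mat) \<Rightarrow> nat list \<Rightarrow> complex mat" where
  "mat_prodl N F xs = foldr (\<lambda>i M. F i * M) xs (1\<^sub>m N)"

lemma mult_assoc_sq: "A \<in> carrier_mat N N \<Longrightarrow> B \<in> carrier_mat N N \<Longrightarrow> C \<in> carrier_mat N N \<Longrightarrow>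
  A * (B * C) = (A * B) * (C :: 'a :: semiring_0 mat)"
  by (simp add: assoc_mult_mat[of _ N N _ N _ N])

lemma mat_prodl_Nil[simp]: "mat_prodl N F [] = 1\<^sub>m N" unfolding mat_prodl_def by simp
lemma mat_prodl_Cons[simp]: "mat_prodl N F (x # xs) = F x * mat_prodl N F xs" unfolding mat_prodl_def by simp

lemma mat_prodl_carrier: "(\<And>i. i \<in> set xs \<Longrightarrow> F i \<in> carrier_mat N N) \<Longrightarrow> mat_prodl N F xs \<in> carrier_mat N N"
proof (induction xs)
  case (Cons a xs)
  have "F a \<in> carrier_mat N N" using Cons.prems by simp
  moreover have "mat_prodl N F xs \<in> carrier_mat N N" using Cons by simp
  ultimately show ?case by simp
qed simp

lemma mat_prodl_cong: "(\<And>i. i \<in> set xs \<Longrightarrow> F i = F' i) \<Longrightarrow> mat_prodl N F xs = mat_prodl N F' xs"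
  by (induction xs) auto

lemma mat_prodl_append:
  assumes "\<And>i. i \<in> set (xs @ [x]) \<Longrightarrow> F i \<in> carrier_mat N N"
  shows "mat_prodl N F (xs @ [x]) = mat_prodl N F xs * F x"
  using assms
proof (induction xs)
  case Nil then show ?case by simp
next
  case (Cons y xs)
  have "mat_prodl N F (xs @ [x]) = mat_prodl N F xs * F x" using Cons by auto
  moreover have "mat_prodl N F xs \<in> carrier_mat N N" using Cons.prems by (intro mat_prodl_carrier) auto
  ultimately show ?case using Cons.prems by (simp add: assoc_mult_mat[of _ N N _ N _ N])
qed

lemma mat_prodl_commute:
  assumes "\<And>i. i \<in> set xs \<Longrightarrow> F i \<in> carrier_mat N N" "G \<in> carrier_mat N N"
    "\<And>i. i \<in> set xs \<Longrightarrow> G * F i = F i * G"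
  shows "G * mat_prodl N F xs = mat_prodl N F xs * G"
  using assms
proof (induction xs)
  case Nil then show ?case by simp
next
  case (Cons x xs)
  have R: "mat_prodl N F xs \<in> carrier_mat N N" using Cons.prems by (intro mat_prodl_carrier) auto
  have Fx: "F x \<in> carrier_mat N N" and GF: "G * F x = F x * G" using Cons.prems by auto
  have "G * (F x * mat_prodl N F xs) = (G * F x) * mat_prodl N F xs"
    by (rule mult_assoc_sq[OF Cons.prems(2) Fx R])
  also have "\<dots> = F x * (G * mat_prodl N F xs)"
    unfolding GF by (rule mult_assoc_sq[OF Fx Cons.prems(2) R, symmetric])
  also have "\<dots> = F x * (mat_prodl N F xs * G)" using Cons by auto
  also have "\<dots> = (F x * mat_prodl N F xs) * G"
    using Fx Cons.prems R by (simp add: assoc_mult_mat[of _ N N _ N _ N])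
  finally show ?case by simp
qed

lemma mat_prodl_absorb:
  assumes "\<And>i. i \<in> set xs \<Longrightarrow> F i \<in> carrier_mat N N" "G \<in> carrier_mat N N"
    "\<And>i. i \<in> set xs \<Longrightarrow> G * F i = F i * G" "k \<in> set xs" "G * F k = F k"
  shows "G * mat_prodl N F xs = mat_prodl N F xs"
  using assms
proof (induction xs)
  case Nil then show ?case by simp
next
  case (Cons x xs)
  have R: "mat_prodl N F xs \<in> carrier_mat N N" using Cons.prems by (intro mat_prodl_carrier) auto
  have Fx: "F x \<in> carrier_mat N N" and GF: "G * F x = F x * G" using Cons.prems by auto
  show ?case
  proof (cases "x = k")
    case True
    then show ?thesis using Cons.prems R Fx by (simp add: assoc_mult_mat[of _ N N _ N _ N, symmetric])
  next
    case False
    have "G * (F x * mat_prodl N F xs) = F x * (G * mat_prodl N F xs)"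
      unfolding mult_assoc_sq[OF Cons.prems(2) Fx R] GF by (rule mult_assoc_sq[OF Fx Cons.prems(2) R, symmetric])
    also have "G * mat_prodl N F xs = mat_prodl N F xs" using Cons False by auto
    finally show ?thesis by simp
  qed
qed

lemma orth_proj_mat_prodl:
  assumes "\<And>i. i \<in> set xs \<Longrightarrow> orth_proj N (F i)"
    "\<And>i j. i \<in> set xs \<Longrightarrow> j \<in> set xs \<Longrightarrow> F i * F j = F j * F i"
  shows "orth_proj N (mat_prodl N F xs)"
  using assms
proof (induction xs)
  case Nil then show ?case by (simp add: orth_proj_def)
next
  case (Cons x xs)
  have c: "\<And>i. i \<in> set (x # xs) \<Longrightarrow> F i \<in> carrier_mat N N" using Cons.prems unfolding orth_proj_def by auto
  have R: "mat_prodl N F xs \<in> carrier_mat N N" using c by (intro mat_prodl_carrier) auto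
  have IH: "orth_proj N (mat_prodl N F xs)" using Cons by auto
  have com: "F x * mat_prodl N F xs = mat_prodl N F xs * F x"
    using Cons.prems c by (intro mat_prodl_commute) auto
  have Fx: "orth_proj N (F x)" using Cons.prems by auto
  have Fxc: "F x \<in> carrier_mat N N" using c by auto
  have "adj (F x * mat_prodl N F xs) = mat_prodl N F xs * F x"
    using IH Fx Fxc R unfolding orth_proj_def by (simp add: adj_mult[of _ N N _ N])
  moreover have "(F x * mat_prodl N F xs) * (F x * mat_prodl N F xs) = F x * mat_prodl N F xs"
  proof -
    have "(F x * mat_prodl N F xs) * (F x * mat_prodl N F xs) = F x * ((mat_prodl N F xs * F x) * mat_prodl N F xs)"
      using Fxc R by (simp add: assoc_mult_mat[of _ N N _ N _ N])
    also have "\<dots> = (F x * F x) * (mat_prodl N F xs * mat_prodl N F xs)"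
      unfolding com[symmetric] using Fxc R by (simp add: assoc_mult_mat[of _ N N _ N _ N])
    finally show ?thesis using IH Fx unfolding orth_proj_def by simp
  qed
  ultimately show ?case using com Fxc R unfolding orth_proj_def by simp
qed

lemma sum_Pow_insert:
  assumes "finite S" "x \<notin> S"
  shows "(\<Sum>A\<in>Pow (insert x S). f A) = (\<Sum>A\<in>Pow S. f A) + (\<Sum>A\<in>Pow S. f (insert x A))"
proof -
  have d: "Pow S \<inter> insert x ` Pow S = {}" using assms by auto
  have i: "inj_on (insert x) (Pow S)" using assms unfolding inj_on_def
    by (metis Diff_insert_absorb PowD in_mono)
  show ?thesis unfolding Pow_insert using assms d i
    by (simp add: sum.union_disjoint sum.reindex)
qed

lemma trace_mult_half_one_plus:
  assumes "P \<in> carrier_mat N N" "G \<in> carrier_mat N N" "R \<in> carrier_mat N N"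
  shows "trace (P * ((1/2) \<cdot>\<^sub>m (1\<^sub>m N + G) * R)) = (1/2) * (trace (P * R) + trace (P * (G * R)))"
proof -
  have "P * ((1/2) \<cdot>\<^sub>m (1\<^sub>m N + G) * R) = (1/2) \<cdot>\<^sub>m (P * R + P * (G * R))"
    using assms by (simp add: add_mult_distrib_mat[of _ N N] mult_add_distrib_mat[of _ N N]
        mult_smult_distrib[of _ N N _ N] mult_smult_assoc_mat[of _ N N _ N])
  then show ?thesis using assms by (simp add: trace_smult[of _ N] trace_add[of _ N])
qed

lemma trace_mult_prod_averages:
  assumes "distinct xs" "\<And>i. i \<in> set xs \<Longrightarrow> G i \<in> carrier_mat N N" "P \<in> carrier_mat N N"
  shows "trace (P * mat_prodl N (\<lambda>i. (1/2) \<cdot>\<^sub>m (1\<^sub>m N + G i)) xs)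
     = (1/2) ^ length xs *
       (\<Sum>A\<in>Pow (set xs). trace (P * mat_prodl N (\<lambda>i. if i \<in> A then G i else 1\<^sub>m N) xs))"
  using assms
proof (induction xs arbitrary: P)
  case (Cons x xs)
  define R where "R = mat_prodl N (\<lambda>i. (1/2) \<cdot>\<^sub>m (1\<^sub>m N + G i)) xs"
  define RA where "RA A = mat_prodl N (\<lambda>i. if i \<in> A then G i else 1\<^sub>m N) xs" for A
  have x: "x \<notin> set xs" and Gx: "G x \<in> carrier_mat N N" using Cons.prems by auto
  have Rc: "R \<in> carrier_mat N N" unfolding R_def using Cons.prems by (intro mat_prodl_carrier) auto
  have RAc: "RA A \<in> carrier_mat N N" for A unfolding RA_def using Cons.prems by (intro mat_prodl_carrier) auto
  have IH: "trace (Q * R) = (1/2) ^ length xs * (\<Sum>A\<in>Pow (set xs). trace (Q * RA A))"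
    if "Q \<in> carrier_mat N N" for Q
    unfolding R_def RA_def using Cons that by auto
  have "trace (P * mat_prodl N (\<lambda>i. (1/2) \<cdot>\<^sub>m (1\<^sub>m N + G i)) (x # xs))
      = (1/2) * (trace (P * R) + trace ((P * G x) * R))"
    unfolding R_def[symmetric] mat_prodl_Cons
    using trace_mult_half_one_plus[OF Cons.prems(3) Gx Rc] Cons.prems(3) Gx Rc by simp
  also have "\<dots> = (1/2) ^ Suc (length xs) *
      ((\<Sum>A\<in>Pow (set xs). trace (P * RA A)) + (\<Sum>A\<in>Pow (set xs). trace ((P * G x) * RA A)))"
    using Cons.prems(3) Gx by (simp add: IH algebra_simps)
  also have "(\<Sum>A\<in>Pow (set xs). trace ((P * G x) * RA A))
      = (\<Sum>A\<in>Pow (set xs). trace (P * mat_prodl N (\<lambda>i. if i \<in> insert x A then G i else 1\<^sub>m N) (x # xs)))"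
  proof (intro sum.cong refl)
    fix A assume "A \<in> Pow (set xs)"
    have "mat_prodl N (\<lambda>i. if i \<in> insert x A then G i else 1\<^sub>m N) xs = RA A"
      unfolding RA_def using x by (intro mat_prodl_cong) auto
    then show "trace ((P * G x) * RA A)
        = trace (P * mat_prodl N (\<lambda>i. if i \<in> insert x A then G i else 1\<^sub>m N) (x # xs))"
      using RAc[of A] Gx Cons.prems by (simp add: assoc_mult_mat[of _ N N _ N _ N])
  qed
  also have "(\<Sum>A\<in>Pow (set xs). trace (P * RA A))
      = (\<Sum>A\<in>Pow (set xs). trace (P * mat_prodl N (\<lambda>i. if i \<in> A then G i else 1\<^sub>m N) (x # xs)))"
  proof (intro sum.cong refl)
    fix A assume "A \<in> Pow (set xs)"
    then have "x \<notin> A" using x by auto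
    then show "trace (P * RA A) = trace (P * mat_prodl N (\<lambda>i. if i \<in> A then G i else 1\<^sub>m N) (x # xs))"
      unfolding RA_def using RAc[of A] RA_def by simp
  qed
  finally show ?case using x by (simp add: sum_Pow_insert)
qed simp

section \<open>Antiunitary maps and Kramers degeneracy\<close>

text \<open>Vectors are functions \<open>nat \<Rightarrow> complex\<close>, only read below the dimension \<open>N\<close>.\<close>

definition mat_app :: "complex mat \<Rightarrow> (nat \<Rightarrow> complex) \<Rightarrow> nat \<Rightarrow> complex" where
  "mat_app M x i = (\<Sum>k<dim_col M. M $$ (i, k) * x k)"

definition cinner :: "nat \<Rightarrow> (nat \<Rightarrow> complex) \<Rightarrow> (nat \<Rightarrow> complex) \<Rightarrow> complex" where
  "cinner N x y = (\<Sum>i<N. cnj (x i) * y i)"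

definition outer :: "nat \<Rightarrow> (nat \<Rightarrow> complex) \<Rightarrow> (nat \<Rightarrow> complex) \<Rightarrow> complex mat" where
  "outer N x y = mat N N (\<lambda>(i, j). x i * cnj (y j))"

definition conj_app :: "complex mat \<Rightarrow> (nat \<Rightarrow> complex) \<Rightarrow> nat \<Rightarrow> complex" where
  "conj_app Y x i = cnj (mat_app Y x i)"

lemma outer_carrier[simp]: "outer N x y \<in> carrier_mat N N" unfolding outer_def by simp
lemma dim_outer[simp]: "dim_row (outer N x y) = N" "dim_col (outer N x y) = N" unfolding outer_def by simp_all
lemma index_outer[simp]: "i < N \<Longrightarrow> j < N \<Longrightarrow> outer N x y $$ (i, j) = x i * cnj (y j)"
  unfolding outer_def by simp

lemma outer_cong: "(\<And>i. i < N \<Longrightarrow> x i = x' i) \<Longrightarrow> (\<And>i. i < N \<Longrightarrow> y i = y' i) \<Longrightarrow> outer N x y = outer N x' y'"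
  by (intro eq_matI) auto

lemma cinner_cong: "(\<And>i. i < N \<Longrightarrow> x i = x' i) \<Longrightarrow> (\<And>i. i < N \<Longrightarrow> y i = y' i) \<Longrightarrow> cinner N x y = cinner N x' y'"
  unfolding cinner_def by (intro sum.cong) auto

lemma adj_outer: "adj (outer N x y) = outer N y x"
  by (intro eq_matI) auto

lemma trace_outer: "trace (outer N x y) = cinner N y x"
  unfolding trace_def cinner_def by (simp add: ac_simps)

lemma cinner_commute: "cinner N y x = cnj (cinner N x y)"
  unfolding cinner_def by (simp add: ac_simps)

lemma cinner_uminus_left: "cinner N (\<lambda>i. - x i) y = - cinner N x y"
  unfolding cinner_def by (simp add: sum_negf)

lemma cinner_mat_app: "M \<in> carrier_mat N N \<Longrightarrow> cinner N x (mat_app M y) = cinner N (mat_app (adj M) x) y"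
proof -
  assume M: "M \<in> carrier_mat N N"
  have "cinner N x (mat_app M y) = (\<Sum>i<N. \<Sum>k<N. cnj (x i) * M $$ (i, k) * y k)"
    unfolding cinner_def mat_app_def using M by (simp add: sum_distrib_left ac_simps)
  also have "\<dots> = (\<Sum>k<N. \<Sum>i<N. cnj (x i) * M $$ (i, k) * y k)" by (rule sum.swap)
  also have "\<dots> = (\<Sum>k<N. (\<Sum>i<N. cnj (x i) * M $$ (i, k)) * y k)"
    by (simp add: sum_distrib_right)
  also have "\<dots> = cinner N (mat_app (adj M) x) y"
    unfolding cinner_def mat_app_def using M by (intro sum.cong refl) (simp add: ac_simps)
  finally show ?thesis .
qed

lemma mat_app_mult: "A \<in> carrier_mat N N \<Longrightarrow> B \<in> carrier_mat N N \<Longrightarrow> i < N \<Longrightarrow> mat_app (A * B) x i = mat_app A (mat_app B x) i"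
proof -
  assume c: "A \<in> carrier_mat N N" "B \<in> carrier_mat N N" "i < N"
  have "mat_app (A * B) x i = (\<Sum>k<N. \<Sum>l<N. A $$ (i, l) * B $$ (l, k) * x k)"
    unfolding mat_app_def using c by (simp add: scalar_prod_def sum_distrib_right lessThan_atLeast0)
  also have "\<dots> = (\<Sum>l<N. \<Sum>k<N. A $$ (i, l) * B $$ (l, k) * x k)" by (rule sum.swap)
  also have "\<dots> = mat_app A (mat_app B x) i"
    unfolding mat_app_def using c by (simp add: sum_distrib_left ac_simps)
  finally show ?thesis .
qed

lemma mat_app_one: "i < N \<Longrightarrow> mat_app (1\<^sub>m N) x i = x i"
proof -
  assume i: "i < N"
  have "mat_app (1\<^sub>m N) x i = (\<Sum>k<N. if k = i then x k else 0)"
    unfolding mat_app_def using i by (intro sum.cong) auto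
  then show ?thesis using i by simp
qed

lemma mat_app_smult: "A \<in> carrier_mat N N \<Longrightarrow> i < N \<Longrightarrow> mat_app (c \<cdot>\<^sub>m A) x i = c * mat_app A x i"
  unfolding mat_app_def by (simp add: sum_distrib_left ac_simps)

lemma cnj_mat_app: "A \<in> carrier_mat N N \<Longrightarrow> i < N \<Longrightarrow> cnj (mat_app A x i) = mat_app (conj_mat A) (\<lambda>k. cnj (x k)) i"
  unfolding mat_app_def by simp

lemma conj_app_scale: "conj_app Y (\<lambda>k. c * x k) i = cnj c * conj_app Y x i"
  unfolding conj_app_def mat_app_def by (simp add: sum_distrib_left ac_simps)

lemma mat_app_conj_app_commute:
  assumes c: "M \<in> carrier_mat N N" "Y \<in> carrier_mat N N" and t: "conj_mat M * Y = Y * M" and i: "i < N"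
  shows "mat_app M (conj_app Y x) i = conj_app Y (mat_app M x) i"
proof -
  have "mat_app M (conj_app Y x) i = cnj (mat_app (conj_mat M) (mat_app Y x) i)"
    unfolding conj_app_def mat_app_def using c i by simp
  also have "mat_app (conj_mat M) (mat_app Y x) i = mat_app (conj_mat M * Y) x i" using c i by (simp add: mat_app_mult[of _ N])
  also have "\<dots> = mat_app Y (mat_app M x) i" using c i t by (simp add: mat_app_mult[of _ N])
  finally show ?thesis unfolding conj_app_def .
qed

lemma cinner_conj_app:
  assumes c: "Y \<in> carrier_mat N N" and u: "adj Y * Y = 1\<^sub>m N"
  shows "cinner N (conj_app Y x) (conj_app Y y) = cinner N y x"
proof -
  have "cinner N (conj_app Y x) (conj_app Y y) = cinner N (mat_app Y y) (mat_app Y x)"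
    unfolding cinner_def conj_app_def by (simp add: ac_simps)
  also have "\<dots> = cinner N y (mat_app (adj Y) (mat_app Y x))" using c by (simp add: cinner_mat_app[of "adj Y"])
  also have "\<dots> = cinner N y (mat_app (adj Y * Y) x)" using c by (intro cinner_cong) (auto simp: mat_app_mult[of _ N])
  also have "\<dots> = cinner N y x" unfolding u by (intro cinner_cong) (auto simp: mat_app_one)
  finally show ?thesis .
qed

lemma conj_app_conj_app:
  assumes c: "Y \<in> carrier_mat N N" and r: "conj_mat Y = Y" and sq: "Y * Y = - 1\<^sub>m N" and i: "i < N"
  shows "conj_app Y (conj_app Y x) i = - x i"
proof -
  have "conj_app Y (conj_app Y x) i = mat_app (conj_mat Y) (mat_app Y x) i"
    unfolding conj_app_def using c i by (simp add: cnj_mat_app[of _ N])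
  also have "\<dots> = mat_app (Y * Y) x i" unfolding r using c i by (simp add: mat_app_mult[of _ N])
  also have "mat_app (Y * Y) x i = mat_app ((-1) \<cdot>\<^sub>m 1\<^sub>m N) x i" unfolding sq uminus_one_mat ..
  also have "\<dots> = - x i" using i by (simp add: mat_app_smult[of _ N] mat_app_one)
  finally show ?thesis .
qed

lemma conj_app_cong: "Y \<in> carrier_mat N N \<Longrightarrow> (\<And>i. i < N \<Longrightarrow> x i = x' i) \<Longrightarrow> conj_app Y x i = conj_app Y x' i"
  unfolding conj_app_def mat_app_def by (auto intro!: sum.cong arg_cong[where f = cnj])

lemma mult_outer: "M \<in> carrier_mat N N \<Longrightarrow> M * outer N x y = outer N (mat_app M x) y"
  by (intro eq_matI) (auto simp: mat_app_def scalar_prod_def sum_distrib_right lessThan_atLeast0 mult.assoc)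

lemma outer_mult_outer: "outer N x y * outer N z w = cinner N y z \<cdot>\<^sub>m outer N x w"
  by (intro eq_matI) (auto simp: cinner_def scalar_prod_def sum_distrib_left sum_distrib_right lessThan_atLeast0 mult.assoc mult.left_commute)

lemma orth_proj_unit_vector: assumes P: "orth_proj N P" and t: "trace P \<noteq> 0"
  shows "\<exists>w. (\<forall>i<N. mat_app P w i = w i) \<and> cinner N w w = 1"
proof -
  have c: "P \<in> carrier_mat N N" "adj P = P" "P * P = P" using P unfolding orth_proj_def by auto
  have "\<exists>j<N. P $$ (j, j) \<noteq> 0"
  proof (rule ccontr)
    assume "\<not> (\<exists>j<N. P $$ (j, j) \<noteq> 0)"
    then have "\<forall>j<N. P $$ (j, j) = 0" by blast
    then have "trace P = 0" unfolding trace_def using c by (auto intro!: sum.neutral)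
    then show False using t by simp
  qed
  then obtain j where j: "j < N" "P $$ (j, j) \<noteq> 0" by blast
  define r where "r = (\<Sum>k<N. (cmod (P $$ (k, j)))\<^sup>2)"
  have Pjj: "P $$ (j, j) = of_real r"
  proof -
    have "P $$ (j, j) = (adj P * P) $$ (j, j)" using c by simp
    also have "\<dots> = (\<Sum>k<N. cnj (P $$ (k, j)) * P $$ (k, j))"
      using c(1) j by (simp add: scalar_prod_def lessThan_atLeast0)
    also have "\<dots> = of_real r" unfolding r_def by (simp add: cnj_mult_self)
    finally show ?thesis .
  qed
  have "r \<ge> 0" unfolding r_def by (intro sum_nonneg) auto
  moreover have "r \<noteq> 0" using j Pjj by auto
  ultimately have r: "r > 0" by simp
  define w where "w i = P $$ (i, j) / of_real (sqrt r)" for i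
  have "mat_app P w i = w i" if i: "i < N" for i
  proof -
    have "mat_app P w i = (\<Sum>k<N. P $$ (i, k) * P $$ (k, j)) / of_real (sqrt r)"
      unfolding mat_app_def w_def using c by (simp add: sum_divide_distrib)
    also have "(\<Sum>k<N. P $$ (i, k) * P $$ (k, j)) = (P * P) $$ (i, j)"
      using c(1) i j by (simp add: scalar_prod_def lessThan_atLeast0)
    finally show ?thesis unfolding w_def using c by simp
  qed
  moreover have "cinner N w w = 1"
  proof -
    have sq: "complex_of_real (sqrt r) * complex_of_real (sqrt r) = complex_of_real r"
      using r by (simp flip: of_real_mult)
    have "cinner N w w = (\<Sum>k<N. cnj (P $$ (k, j)) * P $$ (k, j)) / of_real r"
      unfolding cinner_def w_def using r sq by (simp add: sum_divide_distrib power2_eq_square)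
    also have "\<dots> = of_real r / of_real r" by (simp add: cnj_mult_self r_def)
    finally show ?thesis using r by simp
  qed
  ultimately show ?thesis by blast
qed

lemma orth_proj_outer: assumes "cinner N w w = 1" shows "orth_proj N (outer N w w)"
  unfolding orth_proj_def using assms by (simp add: adj_outer outer_mult_outer)

lemma trace_orth_proj_ge_1: assumes P: "orth_proj N P" and t: "trace P \<noteq> 0"
  shows "\<exists>r\<ge>1. trace P = of_real r"
proof -
  obtain w where w: "\<forall>i<N. mat_app P w i = w i" "cinner N w w = 1" using orth_proj_unit_vector[OF P t] by blast
  have c: "P \<in> carrier_mat N N" using P unfolding orth_proj_def by auto
  have "P * outer N w w = outer N w w" unfolding mult_outer[OF c] by (rule outer_cong) (use w in auto)
  then have "orth_proj N (P - outer N w w)" using P orth_proj_outer[OF w(2)] by (intro orth_proj_diff)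
  then obtain r where r: "r \<ge> 0" "trace (P - outer N w w) = of_real r" using trace_orth_proj_nonneg by blast
  have "trace (P - outer N w w) = trace P - 1" using c w by (simp add: trace_minus[of _ N] trace_outer)
  then have "trace P = of_real (r + 1)" using r by simp
  then show ?thesis using r by (intro exI[of _ "r + 1"]) auto
qed

text \<open>Kramers degeneracy: an antiunitary \<open>x \<mapsto> conj (Y x)\<close> squaring to \<open>-1\<close> has no fixed
  lines, so it maps each unit vector \<open>w\<close> of a rank-2 invariant projector to an orthogonal one.\<close>

lemma kramers_pair:
  assumes P: "orth_proj N P" and trP: "trace P = 2"
    and Yc: "Y \<in> carrier_mat N N" and Yr: "conj_mat Y = Y" and Ysq: "Y * Y = - 1\<^sub>m N"
    and Yu: "adj Y * Y = 1\<^sub>m N"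
    and PT: "conj_mat P * Y = Y * P"
  obtains w where "\<And>i. i < N \<Longrightarrow> mat_app P w i = w i" "cinner N w w = 1"
    "cinner N w (conj_app Y w) = 0" "P = outer N w w + outer N (conj_app Y w) (conj_app Y w)"
proof -
  have Pc: "P \<in> carrier_mat N N" using P unfolding orth_proj_def by auto
  obtain w where w: "\<And>i. i < N \<Longrightarrow> mat_app P w i = w i" and ww: "cinner N w w = 1"
    using orth_proj_unit_vector[OF P] trP by auto
  define v where "v = conj_app Y w"
  have Pv: "mat_app P v i = v i" if i: "i < N" for i
  proof -
    have "mat_app P v i = conj_app Y (mat_app P w) i"
      unfolding v_def using mat_app_conj_app_commute[OF Pc Yc PT i] .
    also have "\<dots> = conj_app Y w i" using Yc w by (intro conj_app_cong) auto
    finally show ?thesis unfolding v_def .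
  qed
  have vv: "cinner N v v = 1" unfolding v_def using cinner_conj_app[OF Yc Yu] ww by simp
  have wv: "cinner N w v = 0"
  proof -
    have "cinner N w v = cinner N (conj_app Y v) (conj_app Y w)"
      using cinner_conj_app[OF Yc Yu, of v w] by simp
    also have "\<dots> = cinner N (\<lambda>i. - w i) v"
      unfolding v_def[symmetric] using conj_app_conj_app[OF Yc Yr Ysq] by (intro cinner_cong) (auto simp: v_def)
    also have "\<dots> = - cinner N w v" by (rule cinner_uminus_left)
    finally show ?thesis by simp
  qed
  define E1 where "E1 = outer N w w"
  define E2 where "E2 = outer N v v"
  have E1c: "E1 \<in> carrier_mat N N" and E2c: "E2 \<in> carrier_mat N N" unfolding E1_def E2_def by simp_all
  have PE1: "P * E1 = E1" unfolding E1_def mult_outer[OF Pc] by (rule outer_cong) (use w in auto)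
  have PE2: "P * E2 = E2" unfolding E2_def mult_outer[OF Pc] by (rule outer_cong) (use Pv in auto)
  have Q1: "orth_proj N (P - E1)"
    using orth_proj_diff[OF P _ PE1] orth_proj_outer[OF ww] unfolding E1_def by blast
  have "(P - E1) * E2 = P * E2 - E1 * E2" using Pc E1c E2c by (rule minus_mult_distrib_mat)
  also have "E1 * E2 = 0\<^sub>m N N" unfolding E1_def E2_def outer_mult_outer wv by (intro eq_matI) auto
  finally have Q1E2: "(P - E1) * E2 = E2" using PE2 E2c by simp
  have Q2: "orth_proj N (P - E1 - E2)"
    using orth_proj_diff[OF Q1 _ Q1E2] orth_proj_outer[OF vv] unfolding E2_def by blast
  have "trace (P - E1 - E2) = trace P - trace E1 - trace E2"
    using Pc E1c E2c by (simp add: trace_minus[of _ N] minus_carrier_mat)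
  also have "\<dots> = 0" unfolding trP E1_def E2_def trace_outer ww vv by simp
  finally have "P - E1 - E2 = 0\<^sub>m N N" using orth_proj_trace_0[OF Q2] by simp
  then have "P = E1 + E2"
  proof (intro eq_matI)
    fix i j assume "P - E1 - E2 = 0\<^sub>m N N" "i < dim_row (E1 + E2)" "j < dim_col (E1 + E2)"
    then show "P $$ (i, j) = (E1 + E2) $$ (i, j)"
      using Pc E1c E2c by (auto simp: algebra_simps dest!: arg_cong[of _ _ "\<lambda>M. M $$ (i, j)"])
  qed (use Pc E1c E2c in auto)
  then show thesis using that w ww wv unfolding E1_def E2_def v_def by blast
qed

lemma cinner_conj_app_hermitian_eq_0:
  assumes Yc: "Y \<in> carrier_mat N N" and Yr: "conj_mat Y = Y" and Ysq: "Y * Y = - 1\<^sub>m N"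
    and Yu: "adj Y * Y = 1\<^sub>m N"
    and Bc: "B \<in> carrier_mat N N" and Bh: "adj B = B" and BT: "conj_mat B * Y = Y * B"
  shows "cinner N (conj_app Y x) (mat_app B x) = 0"
proof -
  let ?b = "cinner N (conj_app Y x) (mat_app B x)"
  have "?b = cinner N (mat_app B (conj_app Y x)) x" using cinner_mat_app[OF Bc] Bh by simp
  also have "\<dots> = cinner N (conj_app Y (mat_app B x)) (\<lambda>i. - conj_app Y (conj_app Y x) i)"
    using mat_app_conj_app_commute[OF Bc Yc BT] conj_app_conj_app[OF Yc Yr Ysq] by (intro cinner_cong) auto
  also have "\<dots> = - ?b" using cinner_conj_app[OF Yc Yu] by (simp add: cinner_def sum_negf)
  finally show ?thesis by simp
qed

lemma kramers_scalar:
  assumes P: "orth_proj N P" and trP: "trace P = 2"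
    and Yc: "Y \<in> carrier_mat N N" and Yr: "conj_mat Y = Y" and Ysq: "Y * Y = - 1\<^sub>m N"
    and Yu: "adj Y * Y = 1\<^sub>m N"
    and PT: "conj_mat P * Y = Y * P"
    and Bc: "B \<in> carrier_mat N N" and Bh: "adj B = B" and BP: "B * P = B" and PB: "P * B = B"
    and BT: "conj_mat B * Y = Y * B"
  shows "\<exists>l::real. B = complex_of_real l \<cdot>\<^sub>m P"
proof -
  have Pc: "P \<in> carrier_mat N N" using P unfolding orth_proj_def by auto
  obtain w where w: "\<And>i. i < N \<Longrightarrow> mat_app P w i = w i" and ww: "cinner N w w = 1"
    and wv: "cinner N w (conj_app Y w) = 0"
    and Pdec: "P = outer N w w + outer N (conj_app Y w) (conj_app Y w)"
    using kramers_pair[OF P trP Yc Yr Ysq Yu PT] by blast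
  define v where "v = conj_app Y w"
  define Bw where "Bw = mat_app B w"
  define a where "a = cinner N w Bw"
  define b where "b = cinner N v Bw"
  have BTw: "mat_app B v i = conj_app Y Bw i" if i: "i < N" for i
    unfolding v_def Bw_def using mat_app_conj_app_commute[OF Bc Yc BT i] .
  have Bw_dec: "Bw i = a * w i + b * v i" if i: "i < N" for i
  proof -
    have "Bw i = mat_app (P * B) w i" unfolding PB Bw_def ..
    also have "\<dots> = mat_app P Bw i" unfolding Bw_def using Pc Bc i by (simp add: mat_app_mult[of _ N])
    also have "\<dots> = a * w i + b * v i"
      unfolding Pdec v_def[symmetric] a_def b_def mat_app_def cinner_def using i
      by (simp add: sum_distrib_left sum.distrib distrib_left ac_simps)
    finally show ?thesis .
  qed
  have b0: "b = 0"
    unfolding b_def v_def Bw_def by (rule cinner_conj_app_hermitian_eq_0[OF Yc Yr Ysq Yu Bc Bh BT])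
  have a_real: "cnj a = a"
  proof -
    have "a = cinner N (mat_app (adj B) w) w" unfolding a_def Bw_def using cinner_mat_app[OF Bc] by simp
    also have "\<dots> = cnj a" unfolding Bh a_def Bw_def by (rule cinner_commute)
    finally show ?thesis by simp
  qed
  have Bw': "Bw i = a * w i" if "i < N" for i using Bw_dec[OF that] b0 by simp
  have Bv': "mat_app B v i = a * v i" if i: "i < N" for i
  proof -
    have "mat_app B v i = conj_app Y (\<lambda>k. a * w k) i" using BTw[OF i] Yc Bw' by (auto intro: conj_app_cong)
    also have "\<dots> = a * v i" unfolding conj_app_scale v_def a_real ..
    finally show ?thesis .
  qed
  have "B = B * outer N w w + B * outer N v v" using BP Pdec Bc by (metis mult_add_distrib_mat outer_carrier v_def)
  also have "\<dots> = a \<cdot>\<^sub>m P"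
    unfolding mult_outer[OF Bc] Pdec v_def[symmetric]
    using Bw' Bv' by (intro eq_matI) (auto simp: Bw_def distrib_left mat_app_def[symmetric])
  finally have "B = complex_of_real (Re a) \<cdot>\<^sub>m P"
    using a_real by (metis Reals_cnj_iff complex_is_Real_iff of_real_Re)
  then show ?thesis by blast
qed

lemma qbit_less_2 [simp]: "qbit j a < 2"
  unfolding qbit_def by simp

lemma less_2_cases: "a < (2::nat) \<Longrightarrow> a = 0 \<or> a = 1"
  by auto

lemma qbit_below_pow2: "a < 2 ^ n \<Longrightarrow> qbit n a = 0"
  unfolding qbit_def by simp

lemma qbit_top_pow2_add: "a < 2 ^ n \<Longrightarrow> qbit n (2 ^ n + a) = 1"
  unfolding qbit_def by simp

lemma qbit_pow2_add: assumes "j < n" shows "qbit j (2 ^ n + a) = qbit j a"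
proof -
  have "(2::nat) ^ n = 2 ^ j * 2 ^ (n - j)" using assms by (simp flip: power_add)
  then have "(2 ^ n + a) div 2 ^ j = 2 ^ (n - j) + a div 2 ^ j" by simp
  moreover have "(2::nat) ^ (n - j) = 2 * 2 ^ (n - j - 1)" using assms
    by (simp flip: power_Suc)
  ultimately show ?thesis unfolding qbit_def by simp
qed

lemma qbit_eqI:
  "a < 2 ^ n \<Longrightarrow> b < 2 ^ n \<Longrightarrow> \<forall>j<n. qbit j a = qbit j b \<Longrightarrow> a = b"
proof (induction n arbitrary: a b)
  case (Suc n)
  have qbit_Suc: "qbit (Suc j) x = qbit j (x div 2)" for j x
    unfolding qbit_def by (simp add: div_mult2_eq)
  have "a div 2 = b div 2"
    using Suc.prems by (intro Suc.IH) (auto simp: qbit_Suc[symmetric] less_mult_imp_div_less)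
  moreover have "a mod 2 = b mod 2" using Suc.prems(3) by (auto simp: qbit_def)
  ultimately show ?case by (metis div_mult_mod_eq)
qed simp

lemma sum_lessThan_add: "(\<Sum>a<k + l. f a) = (\<Sum>a<(k::nat). f a) + (\<Sum>a<l. f (k + a))"
  by (induction l) (simp_all add: add.assoc)

lemma sum_lessThan_pow2_Suc:
  "(\<Sum>a<(2::nat) ^ Suc n. f a) = (\<Sum>a<2 ^ n. f a) + (\<Sum>a<2 ^ n. f (2 ^ n + a))"
  using sum_lessThan_add[of f "2 ^ n" "2 ^ n"] by (simp add: mult_2)

lemma sum_prod_qbits:
  "(\<Sum>a<2 ^ n. \<Prod>j<n. F j (qbit j a)) = (\<Prod>j<n. F j 0 + F j 1 :: 'a :: comm_semiring_1)"
proof (induction n)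
  case (Suc n)
  have low: "(\<Sum>a<2 ^ n. \<Prod>j<Suc n. F j (qbit j a)) = (\<Sum>a<2 ^ n. \<Prod>j<n. F j (qbit j a)) * F n 0"
    by (simp add: sum_distrib_right qbit_below_pow2)
  have high: "(\<Sum>a<2 ^ n. \<Prod>j<Suc n. F j (qbit j (2 ^ n + a)))
      = (\<Sum>a<2 ^ n. \<Prod>j<n. F j (qbit j a)) * F n 1"
    by (simp add: sum_distrib_right qbit_top_pow2_add qbit_pow2_add)
  show ?case
    unfolding sum_lessThan_pow2_Suc low high Suc by (simp add: distrib_left)
qed simp

definition tensor_mat :: "nat \<Rightarrow> (nat \<Rightarrow> nat \<Rightarrow> nat \<Rightarrow> complex) \<Rightarrow> complex mat" where
  "tensor_mat n f = mat (2 ^ n) (2 ^ n) (\<lambda>(a, b). \<Prod>j<n. f j (qbit j a) (qbit j b))"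

lemma tensor_mat_carrier [simp]: "tensor_mat n f \<in> carrier_mat (2 ^ n) (2 ^ n)"
  unfolding tensor_mat_def by simp

lemma dim_tensor_mat [simp]: "dim_row (tensor_mat n f) = 2 ^ n" "dim_col (tensor_mat n f) = 2 ^ n"
  unfolding tensor_mat_def by simp_all

lemma index_tensor_mat:
  "a < 2 ^ n \<Longrightarrow> b < 2 ^ n \<Longrightarrow> tensor_mat n f $$ (a, b) = (\<Prod>j<n. f j (qbit j a) (qbit j b))"
  unfolding tensor_mat_def by simp

lemma pauli_mat_tensor: "pauli_mat n p = tensor_mat n (\<lambda>j. pauli1_entry (p j))"
  unfolding pauli_mat_def tensor_mat_def by simp

lemma tensor_mat_mult:
  "tensor_mat n f * tensor_mat n h = tensor_mat n (\<lambda>j a c. f j a 0 * h j 0 c + f j a 1 * h j 1 c)"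
proof (rule eq_matI)
  fix a c assume "a < dim_row (tensor_mat n (\<lambda>j a c. f j a 0 * h j 0 c + f j a 1 * h j 1 c))"
    and "c < dim_col (tensor_mat n (\<lambda>j a c. f j a 0 * h j 0 c + f j a 1 * h j 1 c))"
  then have a: "a < 2 ^ n" and c: "c < 2 ^ n" by simp_all
  have "(tensor_mat n f * tensor_mat n h) $$ (a, c)
      = (\<Sum>b<2 ^ n. \<Prod>j<n. f j (qbit j a) (qbit j b) * h j (qbit j b) (qbit j c))"
    using a c by (simp add: scalar_prod_def lessThan_atLeast0 index_tensor_mat prod.distrib)
  also have "\<dots> = (\<Prod>j<n. f j (qbit j a) 0 * h j 0 (qbit j c) + f j (qbit j a) 1 * h j 1 (qbit j c))"
    by (rule sum_prod_qbits)
  finally show "(tensor_mat n f * tensor_mat n h) $$ (a, c)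
      = tensor_mat n (\<lambda>j a c. f j a 0 * h j 0 c + f j a 1 * h j 1 c) $$ (a, c)"
    using a c by (simp add: index_tensor_mat)
qed auto

lemma trace_tensor_mat: "trace (tensor_mat n f) = (\<Prod>j<n. f j 0 0 + f j 1 1)"
  unfolding trace_def by (simp add: index_tensor_mat sum_prod_qbits[of "\<lambda>j b. f j b b"])

lemma tensor_mat_cong:
  assumes "\<And>j a b. j < n \<Longrightarrow> a < 2 \<Longrightarrow> b < 2 \<Longrightarrow> f j a b = h j a b"
  shows "tensor_mat n f = tensor_mat n h"
  unfolding tensor_mat_def using assms by (intro eq_matI) (auto intro!: prod.cong)

lemma tensor_mat_factor:
  assumes "\<And>j a b. j < n \<Longrightarrow> a < 2 \<Longrightarrow> b < 2 \<Longrightarrow> f j a b = d j * h j a b"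
  shows "tensor_mat n f = (\<Prod>j<n. d j) \<cdot>\<^sub>m tensor_mat n h"
  unfolding tensor_mat_def using assms by (intro eq_matI) (auto simp: prod.distrib intro!: prod.cong)

lemma tensor_mat_id: "tensor_mat n (\<lambda>j a b. if a = b then 1 else 0) = 1\<^sub>m (2 ^ n)"
proof (rule eq_matI)
  fix a b assume "a < dim_row (1\<^sub>m (2 ^ n))" "b < dim_col (1\<^sub>m (2 ^ n) :: complex mat)"
  then have ab: "a < 2 ^ n" "b < 2 ^ n" by auto
  have "(\<Prod>j<n. (if qbit j a = qbit j b then 1 else 0 :: complex)) = (if a = b then 1 else 0)"
  proof (cases "a = b")
    case False
    then obtain j where "j < n" "qbit j a \<noteq> qbit j b" using qbit_eqI[OF ab] by blast
    then show ?thesis using False by (auto simp: prod_zero_iff)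
  qed simp
  then show "tensor_mat n (\<lambda>j a b. if a = b then 1 else 0) $$ (a, b) = 1\<^sub>m (2 ^ n) $$ (a, b)"
    using ab by (simp add: index_tensor_mat)
qed auto

lemma adj_tensor_mat: "adj (tensor_mat n f) = tensor_mat n (\<lambda>j a b. cnj (f j b a))"
  unfolding adj_def tensor_mat_def by (intro eq_matI) auto

lemma conj_tensor_mat: "conj_mat (tensor_mat n f) = tensor_mat n (\<lambda>j a b. cnj (f j a b))"
  unfolding conj_mat_def tensor_mat_def by (intro eq_matI) auto

fun pauli1_mult :: "pauli1 \<Rightarrow> pauli1 \<Rightarrow> pauli1" where
  "pauli1_mult PI q = q"
| "pauli1_mult PX PI = PX" | "pauli1_mult PX PX = PI" | "pauli1_mult PX PY = PZ" | "pauli1_mult PX PZ = PY"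
| "pauli1_mult PY PI = PY" | "pauli1_mult PY PX = PZ" | "pauli1_mult PY PY = PI" | "pauli1_mult PY PZ = PX"
| "pauli1_mult PZ PI = PZ" | "pauli1_mult PZ PX = PY" | "pauli1_mult PZ PY = PX" | "pauli1_mult PZ PZ = PI"

fun pauli1_mult_phase :: "pauli1 \<Rightarrow> pauli1 \<Rightarrow> complex" where
  "pauli1_mult_phase PI q = 1"
| "pauli1_mult_phase PX PI = 1" | "pauli1_mult_phase PX PX = 1"
| "pauli1_mult_phase PX PY = \<i>" | "pauli1_mult_phase PX PZ = - \<i>"
| "pauli1_mult_phase PY PI = 1" | "pauli1_mult_phase PY PX = - \<i>"
| "pauli1_mult_phase PY PY = 1" | "pauli1_mult_phase PY PZ = \<i>"
| "pauli1_mult_phase PZ PI = 1" | "pauli1_mult_phase PZ PX = \<i>"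
| "pauli1_mult_phase PZ PY = - \<i>" | "pauli1_mult_phase PZ PZ = 1"

definition pauli1_comm_sign :: "pauli1 \<Rightarrow> pauli1 \<Rightarrow> complex" where
  "pauli1_comm_sign a b = (if a = PI \<or> b = PI \<or> a = b then 1 else -1)"

lemma pauli1_entry_mult: "a < 2 \<Longrightarrow> c < 2 \<Longrightarrow>
  pauli1_entry p a 0 * pauli1_entry q 0 c + pauli1_entry p a 1 * pauli1_entry q 1 c
   = pauli1_mult_phase p q * pauli1_entry (pauli1_mult p q) a c"
  by (cases p; cases q; auto dest!: less_2_cases)

lemma pauli1_entry_comm: "a < 2 \<Longrightarrow> c < 2 \<Longrightarrow>
  pauli1_entry p a 0 * pauli1_entry q 0 c + pauli1_entry p a 1 * pauli1_entry q 1 c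
   = pauli1_comm_sign p q *
     (pauli1_entry q a 0 * pauli1_entry p 0 c + pauli1_entry q a 1 * pauli1_entry p 1 c)"
  by (cases p; cases q; auto simp: pauli1_comm_sign_def dest!: less_2_cases)

lemma pauli1_entry_Y_conj: "a < 2 \<Longrightarrow> c < 2 \<Longrightarrow>
  pauli1_entry PY a 0 * pauli1_entry q 0 c + pauli1_entry PY a 1 * pauli1_entry q 1 c
   = (if q = PI then 1 else -1) *
     (cnj (pauli1_entry q a 0) * pauli1_entry PY 0 c + cnj (pauli1_entry q a 1) * pauli1_entry PY 1 c)"
  by (cases q; auto dest!: less_2_cases)

lemma pauli1_entry_hermitian: "a < 2 \<Longrightarrow> c < 2 \<Longrightarrow> cnj (pauli1_entry p c a) = pauli1_entry p a c"
  by (cases p; auto dest!: less_2_cases)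

lemma pauli1_entry_trace: "pauli1_entry p 0 0 + pauli1_entry p 1 1 = (if p = PI then 2 else 0)"
  by (cases p; auto)

lemma pauli1_mult_eq_PI_iff: "pauli1_mult p q = PI \<longleftrightarrow> p = q"
  by (cases p; cases q; auto)

lemma pauli1_mult_phase_in_phases: "pauli1_mult_phase p q \<in> phases"
  unfolding phases_def by (cases p; cases q; auto)

lemma phases_mult: "a \<in> phases \<Longrightarrow> b \<in> phases \<Longrightarrow> a * b \<in> phases"
  unfolding phases_def by auto

lemma phases_nonzero: "a \<in> phases \<Longrightarrow> a \<noteq> 0"
  unfolding phases_def by auto

lemma phases_cnj_mult: "a \<in> phases \<Longrightarrow> cnj a * a = 1"
  unfolding phases_def by auto

lemma prod_phases: "(\<And>j. j < (n::nat) \<Longrightarrow> f j \<in> phases) \<Longrightarrow> (\<Prod>j<n. f j) \<in> phases"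
proof (induction n)
  case 0 then show ?case by (simp add: phases_def)
next
  case (Suc n) then show ?case by (simp add: phases_mult)
qed

lemma prod_sign_eq_power:
  "(\<Prod>j<(n::nat). if P j then 1 else -1 :: complex) = (-1) ^ card {j. j < n \<and> \<not> P j}"
proof (induction n)
  case (Suc n)
  show ?case
  proof (cases "P n")
    case True
    then have "{j. j < Suc n \<and> \<not> P j} = {j. j < n \<and> \<not> P j}" by (auto simp: less_Suc_eq)
    then show ?thesis using Suc True by simp
  next
    case False
    then have "{j. j < Suc n \<and> \<not> P j} = insert n {j. j < n \<and> \<not> P j}" by (auto simp: less_Suc_eq)
    then show ?thesis using Suc False by simp
  qed
qed simp

lemma pauli_mat_carrier [simp]: "pauli_mat n p \<in> carrier_mat (2 ^ n) (2 ^ n)"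
  unfolding pauli_mat_tensor by simp

lemma dim_pauli_mat [simp]: "dim_row (pauli_mat n p) = 2 ^ n" "dim_col (pauli_mat n p) = 2 ^ n"
  unfolding pauli_mat_tensor by simp_all

lemma pauli_mat_mult:
  "pauli_mat n p * pauli_mat n q
   = (\<Prod>j<n. pauli1_mult_phase (p j) (q j)) \<cdot>\<^sub>m pauli_mat n (\<lambda>j. pauli1_mult (p j) (q j))"
  unfolding pauli_mat_tensor tensor_mat_mult by (rule tensor_mat_factor) (rule pauli1_entry_mult; simp)

lemma pauli_mat_comm:
  "pauli_mat n p * pauli_mat n q
   = (\<Prod>j<n. pauli1_comm_sign (p j) (q j)) \<cdot>\<^sub>m (pauli_mat n q * pauli_mat n p)"
  unfolding pauli_mat_tensor tensor_mat_mult by (rule tensor_mat_factor) (rule pauli1_entry_comm; simp)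

lemma pauli_mat_comm_sign:
  "\<exists>e\<in>{1, -1}. pauli_mat n p * pauli_mat n q = e \<cdot>\<^sub>m (pauli_mat n q * pauli_mat n p)"
proof -
  have "(\<Prod>j<n. pauli1_comm_sign (p j) (q j)) \<in> {1, -1}"
    unfolding pauli1_comm_sign_def prod_sign_eq_power by (cases "even (card {j. j < n \<and> \<not> (p j = PI \<or> q j = PI \<or> p j = q j)})") auto
  then show ?thesis using pauli_mat_comm by blast
qed

lemma pauli_mat_cong: "(\<And>j. j < n \<Longrightarrow> p j = q j) \<Longrightarrow> pauli_mat n p = pauli_mat n q"
  unfolding pauli_mat_tensor by (rule tensor_mat_cong) simp

lemma pauli_mat_id: "(\<And>j. j < n \<Longrightarrow> p j = PI) \<Longrightarrow> pauli_mat n p = 1\<^sub>m (2 ^ n)"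
  unfolding pauli_mat_tensor tensor_mat_id[symmetric] by (rule tensor_mat_cong) simp

lemma pauli_mat_square: "pauli_mat n p * pauli_mat n p = 1\<^sub>m (2 ^ n)"
proof -
  have "pauli1_mult_phase q q = 1" "pauli1_mult q q = PI" for q by (cases q; simp)+
  then show ?thesis unfolding pauli_mat_mult by (simp add: pauli_mat_id)
qed

lemma adj_pauli_mat: "adj (pauli_mat n p) = pauli_mat n p"
  unfolding pauli_mat_tensor adj_tensor_mat by (rule tensor_mat_cong) (simp add: pauli1_entry_hermitian)

lemma trace_pauli_mat: "trace (pauli_mat n p) = (if \<forall>j<n. p j = PI then 2 ^ n else 0)"
proof -
  have "trace (pauli_mat n p) = (\<Prod>j<n. if p j = PI then 2 else 0)"
    unfolding pauli_mat_tensor trace_tensor_mat pauli1_entry_trace ..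
  then show ?thesis by (auto simp: prod_zero_iff)
qed

lemma pauli_mat_Y_mult:
  "pauli_mat n (\<lambda>_. PY) * pauli_mat n p
   = (\<Prod>j<n. if p j = PI then 1 else -1) \<cdot>\<^sub>m (conj_mat (pauli_mat n p) * pauli_mat n (\<lambda>_. PY))"
  unfolding pauli_mat_tensor tensor_mat_mult conj_tensor_mat
  by (rule tensor_mat_factor) (rule pauli1_entry_Y_conj; simp)

lemma conj_pauli_mat_Y: "conj_mat (pauli_mat n (\<lambda>_. PY)) = (-1) ^ n \<cdot>\<^sub>m pauli_mat n (\<lambda>_. PY)"
proof -
  have "conj_mat (pauli_mat n (\<lambda>_. PY)) = (\<Prod>j<n. -1) \<cdot>\<^sub>m pauli_mat n (\<lambda>_. PY)"
    unfolding pauli_mat_tensor conj_tensor_mat by (rule tensor_mat_factor) (auto dest!: less_2_cases)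
  then show ?thesis by simp
qed

lemma card_less_split: "card {j. j < n \<and> P j} + card {j. j < n \<and> \<not> P j} = (n::nat)"
proof -
  have "{j. j < n \<and> P j} \<union> {j. j < n \<and> \<not> P j} = {..<n}" by auto
  moreover have "{j. j < n \<and> P j} \<inter> {j. j < n \<and> \<not> P j} = {}" by auto
  ultimately show ?thesis by (metis (no_types, lifting) card_Un_disjoint card_lessThan finite_Un finite_lessThan)
qed

locale qubits =
  fixes n :: nat
begin

abbreviation "N \<equiv> (2::nat) ^ n"

lemma sq_mult_carrier[simp]: "A \<in> carrier_mat N N \<Longrightarrow> B \<in> carrier_mat N N \<Longrightarrow> A * B \<in> carrier_mat N N"
  by (rule mult_carrier_mat)

lemma sq_mult_add: "A \<in> carrier_mat N N \<Longrightarrow> B \<in> carrier_mat N N \<Longrightarrow> C \<in> carrier_mat N N \<Longrightarrow>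
  A * (B + C) = A * B + A * (C :: complex mat)"
  by (rule mult_add_distrib_mat) auto

lemma sq_add_mult: "A \<in> carrier_mat N N \<Longrightarrow> B \<in> carrier_mat N N \<Longrightarrow> C \<in> carrier_mat N N \<Longrightarrow>
  (A + B) * C = A * C + B * (C :: complex mat)"
  by (rule add_mult_distrib_mat) auto

lemma sq_mult_smult: "A \<in> carrier_mat N N \<Longrightarrow> B \<in> carrier_mat N N \<Longrightarrow>
  A * (k \<cdot>\<^sub>m B) = k \<cdot>\<^sub>m (A * (B :: complex mat))"
  by (rule mult_smult_distrib) auto

lemma sq_smult_mult: "A \<in> carrier_mat N N \<Longrightarrow> B \<in> carrier_mat N N \<Longrightarrow>
  (k \<cdot>\<^sub>m A) * B = k \<cdot>\<^sub>m (A * (B :: complex mat))"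
  by (rule mult_smult_assoc_mat) auto

lemma sq_assoc: "A \<in> carrier_mat N N \<Longrightarrow> B \<in> carrier_mat N N \<Longrightarrow> C \<in> carrier_mat N N \<Longrightarrow>
  (A * B) * C = A * (B * (C :: complex mat))"
  by (rule assoc_mult_mat) auto

lemma sq_tr_smult: "A \<in> carrier_mat N N \<Longrightarrow> trace (k \<cdot>\<^sub>m A) = k * trace A"
  by (rule trace_smult)

lemma sq_tr_add: "A \<in> carrier_mat N N \<Longrightarrow> B \<in> carrier_mat N N \<Longrightarrow> trace (A + B) = trace A + trace B"
  by (rule trace_add)

lemma sq_adj_mult: "A \<in> carrier_mat N N \<Longrightarrow> B \<in> carrier_mat N N \<Longrightarrow> adj (A * B) = adj B * adj A"
  by (rule adj_mult) auto

lemmas sq_simps = sq_mult_add sq_add_mult sq_mult_smult sq_smult_mult sq_tr_smult sq_tr_add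

lemma one_mat_neq_zero_mat: "1\<^sub>m N \<noteq> (0\<^sub>m N N :: complex mat)"
proof
  assume "1\<^sub>m N = (0\<^sub>m N N :: complex mat)"
  then have "1\<^sub>m N $$ (0, 0) = (0\<^sub>m N N :: complex mat) $$ (0, 0)" by simp
  then show False by simp
qed

lemma eq_0_if_eq_uminus: "(X :: complex mat) \<in> carrier_mat N N \<Longrightarrow> X = (-1) \<cdot>\<^sub>m X \<Longrightarrow> X = 0\<^sub>m N N"
proof (rule eq_matI)
  fix i j assume X: "X \<in> carrier_mat N N" "X = (-1) \<cdot>\<^sub>m X" and ij: "i < dim_row (0\<^sub>m N N :: complex mat)" "j < dim_col (0\<^sub>m N N :: complex mat)"
  then have "X $$ (i, j) = - X $$ (i, j)" by (metis carrier_matD index_smult_mat(1) index_zero_mat(2,3) mult_minus1)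
  then show "X $$ (i, j) = 0\<^sub>m N N $$ (i, j)" using ij by simp
qed auto

lemma idem_mult_left: assumes "(A :: complex mat) \<in> carrier_mat N N" "X \<in> carrier_mat N N" "A * A = A"
  shows "A * (A * X) = A * X"
proof -
  have "(A * A) * X = A * (A * X)" by (rule sq_assoc[OF assms(1) assms(1) assms(2)])
  then show ?thesis using assms(3) by simp
qed

lemma index_mult3: assumes "A \<in> carrier_mat N N" "B \<in> carrier_mat N N" "C \<in> carrier_mat N N"
  "x < N" "y < N"
  shows "(A * B * C) $$ (x, y) = (\<Sum>c<N. \<Sum>b<N. A $$ (x, b) * B $$ (b, c) * C $$ (c, y))"
proof -
  have "(A * B * C) $$ (x, y) = row (A * B) x \<bullet> col C y" by (rule index_mult_mat) (use assms in auto)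
  also have "\<dots> = (\<Sum>c<N. (A * B) $$ (x, c) * C $$ (c, y))"
    unfolding scalar_prod_def using assms by (auto simp: lessThan_atLeast0 intro!: sum.cong)
  also have "\<dots> = (\<Sum>c<N. (\<Sum>b<N. A $$ (x, b) * B $$ (b, c)) * C $$ (c, y))"
    using assms by (intro sum.cong refl) (simp add: scalar_prod_def lessThan_atLeast0)
  finally show ?thesis by (simp add: sum_distrib_right)
qed

lemma one_plus_mult: "(X :: complex mat) \<in> carrier_mat N N \<Longrightarrow> Y \<in> carrier_mat N N \<Longrightarrow>
   (1\<^sub>m N + X) * (1\<^sub>m N + Y) = 1\<^sub>m N + X + Y + X * Y"
proof -
  assume c: "X \<in> carrier_mat N N" "Y \<in> carrier_mat N N"
  have "(1\<^sub>m N + X) * (1\<^sub>m N + Y) = 1\<^sub>m N * (1\<^sub>m N + Y) + X * (1\<^sub>m N + Y)"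
    using c by (intro add_mult_distrib_mat) auto
  also have "X * (1\<^sub>m N + Y) = X * 1\<^sub>m N + X * Y"
    using c by (intro mult_add_distrib_mat) auto
  also have "1\<^sub>m N * (1\<^sub>m N + Y) = 1\<^sub>m N + Y" by (rule left_mult_one_mat[of _ N N]) (use c in simp)
  also have "X * 1\<^sub>m N = X" using c by simp
  finally show ?thesis using c by (intro eq_matI) auto
qed

lemma commute_affine:
  assumes c: "A \<in> carrier_mat N N" "B \<in> carrier_mat N N" and AB: "A * B = B * A"
  shows "A * (b \<cdot>\<^sub>m (1\<^sub>m N + d \<cdot>\<^sub>m B)) = (b \<cdot>\<^sub>m (1\<^sub>m N + (d::complex) \<cdot>\<^sub>m B)) * A"
  using c AB by (simp add: sq_simps)

lemma affine_commute_affine: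
  assumes c: "A \<in> carrier_mat N N" "B \<in> carrier_mat N N" and AB: "A * B = B * A"
  shows "(a \<cdot>\<^sub>m (1\<^sub>m N + c \<cdot>\<^sub>m A)) * (b \<cdot>\<^sub>m (1\<^sub>m N + d \<cdot>\<^sub>m B))
       = (b \<cdot>\<^sub>m (1\<^sub>m N + d \<cdot>\<^sub>m B)) * (a \<cdot>\<^sub>m (1\<^sub>m N + (c::complex) \<cdot>\<^sub>m A))"
proof -
  have "B * (a \<cdot>\<^sub>m (1\<^sub>m N + c \<cdot>\<^sub>m A)) = (a \<cdot>\<^sub>m (1\<^sub>m N + c \<cdot>\<^sub>m A)) * B"
    using commute_affine[OF c(2,1) AB[symmetric]] .
  then show ?thesis using c by (intro commute_affine) auto
qed

lemma orth_proj_half_one_plus: assumes c: "M \<in> carrier_mat N N" and h: "adj M = M" and sq: "M * M = 1\<^sub>m N"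
  shows "orth_proj N ((1/2) \<cdot>\<^sub>m (1\<^sub>m N + M))"
proof -
  have X: "(1\<^sub>m N + M) * (1\<^sub>m N + M) = 2 \<cdot>\<^sub>m (1\<^sub>m N + M)" using c sq by (intro one_mult_sq) auto
  have "((1/2) \<cdot>\<^sub>m (1\<^sub>m N + M)) * ((1/2) \<cdot>\<^sub>m (1\<^sub>m N + M)) = (1/2 * (1/2)) \<cdot>\<^sub>m ((1\<^sub>m N + M) * (1\<^sub>m N + M))"
    using c by (intro smult_mult_smult) auto
  also have "\<dots> = (1/2) \<cdot>\<^sub>m (1\<^sub>m N + M)" unfolding X by simp
  finally show ?thesis unfolding orth_proj_def using c h by (simp add: adj_smult adj_add[of _ N N])
qed

context
  fixes H :: "complex mat set"
  assumes H_carrier: "H \<subseteq> carrier_mat N N"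
begin

lemma gen_group_carrier: "M \<in> gen_group n H \<Longrightarrow> M \<in> carrier_mat N N"
  by (induction rule: gen_group.induct) (use H_carrier in auto)

lemma generator_in_gen_group:
  assumes "h \<in> H" shows "h \<in> gen_group n H"
proof -
  have "h * 1\<^sub>m N \<in> gen_group n H" using assms by (intro gen_mult gen_one)
  then show ?thesis using assms H_carrier by auto
qed

lemma gen_group_mult:
  assumes "M1 \<in> gen_group n H" "M2 \<in> gen_group n H" shows "M1 * M2 \<in> gen_group n H"
  using assms(1)
proof (induction rule: gen_group.induct)
  case gen_one
  show ?case using gen_group_carrier[OF assms(2)] assms(2) by simp
next
  case (gen_mult h M)
  have "h \<in> carrier_mat N N" "M \<in> carrier_mat N N" "M2 \<in> carrier_mat N N"
    using gen_mult H_carrier gen_group_carrier assms(2) by auto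
  then have "h * M * M2 = h * (M * M2)" by (rule sq_assoc)
  then show ?case using gen_mult gen_group.gen_mult by simp
qed

lemma gen_group_commute:
  assumes P: "P \<in> carrier_mat N N" and H_comm: "\<And>h. h \<in> H \<Longrightarrow> h * P = P * h"
  shows "M \<in> gen_group n H \<Longrightarrow> M * P = P * M"
proof (induction rule: gen_group.induct)
  case (gen_mult h M)
  have hc: "h \<in> carrier_mat N N" and Mc: "M \<in> carrier_mat N N"
    using gen_mult H_carrier gen_group_carrier by auto
  have "h * M * P = h * (P * M)" using sq_assoc[OF hc Mc P] gen_mult.IH by simp
  also have "\<dots> = (h * P) * M" using sq_assoc[OF hc P Mc] by simp
  also have "\<dots> = P * (h * M)" using sq_assoc[OF P hc Mc] H_comm[OF gen_mult.hyps(1)] by simp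
  finally show ?case .
qed (use P in simp)

lemma gen_group_mult_absorb:
  assumes P: "P \<in> carrier_mat N N" and H_absorb: "\<And>h. h \<in> H \<Longrightarrow> h * P = P"
  shows "M \<in> gen_group n H \<Longrightarrow> M * P = P"
proof (induction rule: gen_group.induct)
  case (gen_mult h M)
  have "h \<in> carrier_mat N N" "M \<in> carrier_mat N N"
    using gen_mult H_carrier gen_group_carrier by auto
  then have "h * M * P = h * (M * P)" using P by (rule sq_assoc)
  then show ?case using gen_mult H_absorb by simp
qed (use P in simp)

end

abbreviation "Yall \<equiv> iY_all n"

lemma Yall_eq: "Yall = (\<i> ^ n) \<cdot>\<^sub>m pauli_mat n (\<lambda>_. PY)" unfolding iY_all_def ..

lemma Yall_carrier[simp]: "Yall \<in> carrier_mat N N" unfolding Yall_eq by simp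

lemma dim_Yall[simp]: "dim_row Yall = N" "dim_col Yall = N" unfolding Yall_eq by simp_all

lemma conj_Yall: "conj_mat Yall = Yall"
proof -
  have "conj_mat Yall = (cnj (\<i> ^ n) * (-1) ^ n) \<cdot>\<^sub>m pauli_mat n (\<lambda>_. PY)"
    unfolding Yall_eq conj_mat_smult conj_pauli_mat_Y by simp
  also have "cnj (\<i> ^ n) * (-1) ^ n = \<i> ^ n"
    by (simp add: power_mult_distrib[symmetric])
  finally show ?thesis unfolding Yall_eq .
qed

lemma Yall_square: "Yall * Yall = (-1) ^ n \<cdot>\<^sub>m 1\<^sub>m N"
proof -
  have "Yall * Yall = (\<i> ^ n * \<i> ^ n) \<cdot>\<^sub>m 1\<^sub>m N"
    unfolding Yall_eq by (simp add: smult_mult_smult[of _ N] pauli_mat_square)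
  also have "\<i> ^ n * \<i> ^ n = ((-1) ^ n :: complex)"
    by (simp add: power_mult_distrib[symmetric])
  finally show ?thesis .
qed

lemma Yall_unitary: "adj Yall * Yall = 1\<^sub>m N"
proof -
  have "adj Yall * Yall = (cnj (\<i> ^ n) * \<i> ^ n) \<cdot>\<^sub>m 1\<^sub>m N"
    unfolding Yall_eq adj_smult adj_pauli_mat by (simp add: smult_mult_smult[of _ N] pauli_mat_square)
  also have "cnj (\<i> ^ n) * \<i> ^ n = (1 :: complex)"
    by (simp add: power_mult_distrib[symmetric])
  finally show ?thesis by simp
qed

text \<open>Commutation with the time reversal \<open>T = K (iY)\<^sup>\<otimes>\<^sup>n\<close>, \<open>K\<close> the entrywise complex conjugation.\<close>

definition t_symmetric :: "complex mat \<Rightarrow> bool" where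
  "t_symmetric M \<longleftrightarrow> conj_mat M * Yall = Yall * M"

lemma t_symmetric_one: "t_symmetric (1\<^sub>m N)"
  unfolding t_symmetric_def by simp

lemma t_symmetric_mult: assumes "A \<in> carrier_mat N N" "B \<in> carrier_mat N N" "t_symmetric A" "t_symmetric B"
  shows "t_symmetric (A * B)"
proof -
  have "conj_mat (A * B) * Yall = conj_mat A * (conj_mat B * Yall)"
    using assms by (simp add: conj_mat_mult[of _ N N] sq_assoc)
  also have "\<dots> = conj_mat A * (Yall * B)" using assms unfolding t_symmetric_def by simp
  also have "\<dots> = (conj_mat A * Yall) * B" using assms by (simp add: sq_assoc)
  also have "\<dots> = (Yall * A) * B" using assms unfolding t_symmetric_def by simp
  also have "\<dots> = Yall * (A * B)" using assms by (simp add: sq_assoc)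
  finally show ?thesis unfolding t_symmetric_def .
qed

lemma t_symmetric_add: assumes "A \<in> carrier_mat N N" "B \<in> carrier_mat N N" "t_symmetric A" "t_symmetric B"
  shows "t_symmetric (A + B)"
  using assms unfolding t_symmetric_def by (simp add: conj_mat_add[of _ N N] sq_simps)

lemma t_symmetric_smult: assumes "A \<in> carrier_mat N N" "t_symmetric A" "cnj c = c"
  shows "t_symmetric (c \<cdot>\<^sub>m A)"
  using assms unfolding t_symmetric_def by (simp add: conj_mat_smult sq_simps)

lemma t_symmetric_pauli_mat: assumes "even (pauli_weight n p)" shows "t_symmetric (pauli_mat n p)"
proof -
  have s: "(\<Prod>j<n. if p j = PI then 1 else -1 :: complex) = 1"
    unfolding prod_sign_eq_power using assms unfolding pauli_weight_def by simp
  have "Yall * pauli_mat n p = \<i> ^ n \<cdot>\<^sub>m (pauli_mat n (\<lambda>_. PY) * pauli_mat n p)"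
    unfolding Yall_eq by (simp add: sq_simps)
  also have "\<dots> = \<i> ^ n \<cdot>\<^sub>m (conj_mat (pauli_mat n p) * pauli_mat n (\<lambda>_. PY))"
    unfolding pauli_mat_Y_mult s by simp
  also have "\<dots> = conj_mat (pauli_mat n p) * Yall"
    unfolding Yall_eq by (simp add: sq_simps)
  finally show ?thesis unfolding t_symmetric_def by simp
qed

lemma t_symmetric_mat_prodl: "(\<And>i. i \<in> set xs \<Longrightarrow> F i \<in> carrier_mat N N \<and> t_symmetric (F i)) \<Longrightarrow> t_symmetric (mat_prodl N F xs)"
proof (induction xs)
  case Nil then show ?case by (simp add: t_symmetric_one)
next
  case (Cons x xs)
  have "mat_prodl N F xs \<in> carrier_mat N N" using Cons.prems by (intro mat_prodl_carrier) auto
  then show ?case using Cons by (auto intro!: t_symmetric_mult)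
qed

lemma t_symmetric_adj: assumes "A \<in> carrier_mat N N" "t_symmetric A" "adj A * A = 1\<^sub>m N" "A * adj A = 1\<^sub>m N"
  shows "t_symmetric (adj A)"
proof -
  have c1: "conj_mat (adj A) \<in> carrier_mat N N" "adj A \<in> carrier_mat N N" using assms(1) by simp_all
  have "conj_mat (adj A) * Yall = conj_mat (adj A) * Yall * (A * adj A)" using assms by simp
  also have "\<dots> = conj_mat (adj A) * (Yall * A) * adj A" using assms(1) c1
    by (simp add: sq_assoc[of "conj_mat (adj A)"] sq_assoc[of Yall] sq_assoc[of "conj_mat (adj A) * Yall"])
  also have "\<dots> = conj_mat (adj A) * (conj_mat A * Yall) * adj A" using assms unfolding t_symmetric_def by simp
  also have "\<dots> = (conj_mat (adj A) * conj_mat A) * Yall * adj A" using assms(1) c1 by (simp add: sq_assoc)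
  also have "conj_mat (adj A) * conj_mat A = conj_mat (adj A * A)" using assms(1) by (simp add: conj_mat_mult[of _ N N])
  also have "\<dots> = 1\<^sub>m N" using assms by simp
  also have "1\<^sub>m N * Yall * adj A = Yall * adj A" by simp
  finally show ?thesis unfolding t_symmetric_def .
qed

lemma t_symmetric_if_time_rev_commute:
  assumes U: "U \<in> carrier_mat N N"
    and T: "\<forall>v \<in> carrier_vec N. U *\<^sub>v time_rev n v = time_rev n (U *\<^sub>v v)"
  shows "t_symmetric U"
proof -
  have "(conj_mat U * Yall) *\<^sub>v v = (Yall * U) *\<^sub>v v" if v: "v \<in> carrier_vec N" for v
  proof (rule eq_vecI)
    fix i assume i: "i < dim_vec ((Yall * U) *\<^sub>v v)"
    then have iN: "i < N" by simp
    have "(U *\<^sub>v time_rev n v) $ i = time_rev n (U *\<^sub>v v) $ i" using T v by simp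
    moreover have "(U *\<^sub>v time_rev n v) $ i = cnj (((conj_mat U * Yall) *\<^sub>v v) $ i)"
      using iN U v unfolding time_rev_def vec_cnj_def
      apply (simp add: scalar_prod_def sum_distrib_left ac_simps)
      by (rule sum.swap)
    moreover have "time_rev n (U *\<^sub>v v) $ i = cnj (((Yall * U) *\<^sub>v v) $ i)"
      using iN U v unfolding time_rev_def vec_cnj_def
      apply (simp add: scalar_prod_def sum_distrib_left ac_simps)
      by (rule sum.swap)
    ultimately show "((conj_mat U * Yall) *\<^sub>v v) $ i = ((Yall * U) *\<^sub>v v) $ i" by simp
  qed (use U in simp)
  then show ?thesis unfolding t_symmetric_def using U by (intro eq_mat_by_mult_vec[of _ N N]) auto
qed

definition z_string :: "nat \<Rightarrow> complex mat" where
  "z_string u = pauli_mat n (\<lambda>j. if qbit j u = 1 then PZ else PI)"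

definition z_char :: "nat \<Rightarrow> nat \<Rightarrow> complex" where
  "z_char a u = (\<Prod>j<n. if qbit j u = 1 \<and> qbit j a = 1 then -1 else 1)"

lemma z_string_carrier[simp]: "z_string u \<in> carrier_mat N N" unfolding z_string_def by simp

lemma z_char_bit_sum: "a < 2 \<Longrightarrow> b < 2 \<Longrightarrow> c < 2 \<Longrightarrow>
  (if 0 = (1::nat) \<and> a = 1 then -1 else 1) * pauli1_entry (if 0 = (1::nat) then PZ else PI) b c
  + (if 1 = (1::nat) \<and> a = 1 then -1 else 1) * pauli1_entry (if 1 = (1::nat) then PZ else PI) b c
  = (if b = c \<and> a = b then 2 else (0::complex))"
  by (auto dest!: less_2_cases)

lemma sum_z_char_z_string: assumes abc: "a < N" "b < N" "c < N"
  shows "(\<Sum>u<N. z_char a u * z_string u $$ (b, c)) = (if a = b \<and> b = c then of_nat N else 0)"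
proof -
  define h where "h j (bt::nat) = (if bt = 1 \<and> qbit j a = 1 then -1 else 1) *
      pauli1_entry (if bt = 1 then PZ else PI) (qbit j b) (qbit j c)" for j bt
  have "z_char a u * z_string u $$ (b, c) = (\<Prod>j<n. h j (qbit j u))" for u
    unfolding z_char_def z_string_def h_def pauli_mat_def using abc by (simp add: prod.distrib)
  then have "(\<Sum>u<N. z_char a u * z_string u $$ (b, c)) = (\<Prod>j<n. h j 0 + h j 1)"
    using sum_prod_qbits[of h n] by simp
  also have "\<dots> = (\<Prod>j<n. if qbit j b = qbit j c \<and> qbit j a = qbit j b then 2 else 0)"
    unfolding h_def by (intro prod.cong refl) (rule z_char_bit_sum; simp)
  also have "\<dots> = (if \<forall>j<n. qbit j b = qbit j c \<and> qbit j a = qbit j b then 2 ^ n else 0)"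
    by (auto simp: prod_zero_iff)
  also have "(\<forall>j<n. qbit j b = qbit j c \<and> qbit j a = qbit j b) \<longleftrightarrow> a = b \<and> b = c"
    using qbit_eqI[of b n c] qbit_eqI[of a n b] abc by auto
  finally show ?thesis by simp
qed

text \<open>Fourier inversion over the group of Z-strings: the characters \<open>z_char a\<close> pick out the
  diagonal matrix unit \<open>|a\<rangle>\<langle>a|\<close> from the Z-strings.\<close>

lemma z_string_sandwich_inversion:
  assumes P: "P \<in> carrier_mat N N" and lam: "\<And>u. P * z_string u * P = lam u \<cdot>\<^sub>m P"
    and xy: "x < N" "y < N" and a: "a < N"
  shows "of_nat N * (P $$ (x, a) * P $$ (a, y)) = (\<Sum>u<N. z_char a u * lam u) * P $$ (x, y)"
proof -
  have "(\<Sum>u<N. z_char a u * (P * z_string u * P) $$ (x, y))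
      = (\<Sum>u<N. \<Sum>c<N. \<Sum>b<N. z_char a u * (P $$ (x, b) * z_string u $$ (b, c) * P $$ (c, y)))"
    unfolding index_mult3[OF P z_string_carrier P xy] by (simp add: sum_distrib_left ac_simps)
  also have "\<dots> = (\<Sum>c<N. \<Sum>b<N. \<Sum>u<N. z_char a u * (P $$ (x, b) * z_string u $$ (b, c) * P $$ (c, y)))"
    by (subst sum.swap) (subst (2) sum.swap, rule refl)
  also have "\<dots> = (\<Sum>c<N. \<Sum>b<N. P $$ (x, b) * P $$ (c, y) * (\<Sum>u<N. z_char a u * z_string u $$ (b, c)))"
    by (simp add: sum_distrib_left ac_simps)
  also have "\<dots> = (\<Sum>c<N. \<Sum>b<N. if b = a then if c = a then P $$ (x, a) * P $$ (a, y) * of_nat N else 0 else 0)"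
    using a by (intro sum.cong refl) (auto simp: sum_z_char_z_string)
  also have "\<dots> = P $$ (x, a) * P $$ (a, y) * of_nat N"
    using a by simp
  finally have "(\<Sum>u<N. z_char a u * (P * z_string u * P) $$ (x, y)) = P $$ (x, a) * P $$ (a, y) * of_nat N" .
  moreover have "(\<Sum>u<N. z_char a u * (P * z_string u * P) $$ (x, y)) = (\<Sum>u<N. z_char a u * lam u) * P $$ (x, y)"
    unfolding lam using xy P by (simp add: sum_distrib_right mult.assoc)
  ultimately show ?thesis by (simp add: ac_simps)
qed

lemma trace_orth_proj_z_string_scalar:
  assumes P: "orth_proj N P" and lam: "\<And>u. P * z_string u * P = lam u \<cdot>\<^sub>m P" and "trace P \<noteq> 0"
  shows "trace P = 1"
proof -
  have Pc: "P \<in> carrier_mat N N" and PP: "P * P = P" using P unfolding orth_proj_def by auto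
  obtain a where a: "a < N" "P $$ (a, a) \<noteq> 0"
    using \<open>trace P \<noteq> 0\<close> Pc unfolding trace_def by (metis (no_types, lifting) carrier_matD(1) lessThan_iff sum.neutral)
  define mu where "mu = (\<Sum>u<N. z_char a u * lam u)"
  note inv = z_string_sandwich_inversion[OF Pc lam _ _ a(1), folded mu_def]
  have mu: "mu = of_nat N * P $$ (a, a)" using inv[OF a(1) a(1)] a(2) by (simp add: field_simps)
  have "of_nat N * P $$ (a, a) = of_nat N * (P * P) $$ (a, a)" using PP by simp
  also have "\<dots> = (\<Sum>x<N. of_nat N * (P $$ (a, x) * P $$ (x, a)))"
    using a Pc by (simp add: scalar_prod_def lessThan_atLeast0 sum_distrib_left)
  also have "\<dots> = (\<Sum>x<N. mu * P $$ (x, x))" using inv a by (simp add: ac_simps)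
  also have "\<dots> = mu * trace P" unfolding trace_def using Pc by (simp add: sum_distrib_left)
  finally show ?thesis unfolding mu using a(2) by simp
qed

abbreviation "Xall \<equiv> pauli_mat n (\<lambda>_. PX)"
abbreviation "Zall \<equiv> pauli_mat n (\<lambda>_. PZ)"

lemma pauli_mat_comm_Xall:
  "z_type n p \<Longrightarrow> pauli_mat n p * Xall = (-1) ^ pauli_weight n p \<cdot>\<^sub>m (Xall * pauli_mat n p)"
  "x_type n p \<Longrightarrow> pauli_mat n p * Xall = Xall * pauli_mat n p"
proof -
  assume "z_type n p"
  then have "(\<Prod>j<n. pauli1_comm_sign (p j) PX) = (\<Prod>j<n. if p j = PI then 1 else -1)"
    unfolding z_type_def pauli1_comm_sign_def by (intro prod.cong) auto
  then show "pauli_mat n p * Xall = (-1) ^ pauli_weight n p \<cdot>\<^sub>m (Xall * pauli_mat n p)"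
    using pauli_mat_comm[of n p "\<lambda>_. PX"] unfolding prod_sign_eq_power pauli_weight_def by simp
next
  assume "x_type n p"
  then have "(\<Prod>j<n. pauli1_comm_sign (p j) PX) = 1"
    unfolding x_type_def pauli1_comm_sign_def by (intro prod.neutral) auto
  then show "pauli_mat n p * Xall = Xall * pauli_mat n p" using pauli_mat_comm[of n p "\<lambda>_. PX"] by simp
qed

lemma pauli_mat_comm_Zall:
  "x_type n p \<Longrightarrow> pauli_mat n p * Zall = (-1) ^ pauli_weight n p \<cdot>\<^sub>m (Zall * pauli_mat n p)"
  "z_type n p \<Longrightarrow> pauli_mat n p * Zall = Zall * pauli_mat n p"
proof -
  assume "x_type n p"
  then have "(\<Prod>j<n. pauli1_comm_sign (p j) PZ) = (\<Prod>j<n. if p j = PI then 1 else -1)"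
    unfolding x_type_def pauli1_comm_sign_def by (intro prod.cong) auto
  then show "pauli_mat n p * Zall = (-1) ^ pauli_weight n p \<cdot>\<^sub>m (Zall * pauli_mat n p)"
    using pauli_mat_comm[of n p "\<lambda>_. PZ"] unfolding prod_sign_eq_power pauli_weight_def by simp
next
  assume "z_type n p"
  then have "(\<Prod>j<n. pauli1_comm_sign (p j) PZ) = 1"
    unfolding z_type_def pauli1_comm_sign_def by (intro prod.neutral) auto
  then show "pauli_mat n p * Zall = Zall * pauli_mat n p" using pauli_mat_comm[of n p "\<lambda>_. PZ"] by simp
qed

lemma pauli_op_adj_mult: "C \<in> pauli_ops n \<Longrightarrow> adj C * C = 1\<^sub>m N"
  unfolding pauli_ops_def
  by (auto simp: adj_smult adj_pauli_mat smult_mult_smult[of _ N] pauli_mat_square phases_cnj_mult)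

lemma pauli_op_adj: "C \<in> pauli_ops n \<Longrightarrow> \<exists>d. d \<noteq> 0 \<and> adj C = d \<cdot>\<^sub>m C"
proof -
  assume "C \<in> pauli_ops n"
  then obtain c p where c: "c \<in> phases" "C = c \<cdot>\<^sub>m pauli_mat n p" unfolding pauli_ops_def by blast
  have "adj C = (cnj c * cnj c) \<cdot>\<^sub>m C" using phases_cnj_mult[OF c(1)] unfolding c(2) adj_smult adj_pauli_mat
    by (simp add: mult.assoc)
  moreover have "cnj c * cnj c \<noteq> 0" using phases_nonzero[OF c(1)] by simp
  ultimately show ?thesis by blast
qed

lemma intertwine_sym:
  assumes C: "C \<in> carrier_mat N N" and d: "d \<noteq> 0" "adj C = d \<cdot>\<^sub>m C"
    and A: "A \<in> carrier_mat N N" "adj A = A" and B: "B \<in> carrier_mat N N" "adj B = B"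
    and AC: "A * C = C * B"
  shows "B * C = C * A"
proof -
  have "adj (A * C) = adj (C * B)" using AC by simp
  then have "d \<cdot>\<^sub>m (C * A) = d \<cdot>\<^sub>m (B * C)" using A B C d by (simp add: sq_adj_mult sq_simps)
  then have "(1 / d) \<cdot>\<^sub>m (d \<cdot>\<^sub>m (C * A)) = (1 / d) \<cdot>\<^sub>m (d \<cdot>\<^sub>m (B * C))" by simp
  then show ?thesis using d(1) by simp
qed

lemma normalize_to_unitary_on_code:
  assumes P: "orth_proj N P" and V: "V \<in> carrier_mat N N" and l: "l \<ge> 0"
    and VV: "adj V * V = complex_of_real l \<cdot>\<^sub>m P" and PV: "P * V = V" and VP: "V * P = V"
  obtains W where "unitary_on_code N P W" "V = complex_of_real (sqrt l) \<cdot>\<^sub>m (W * P)"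
proof (cases "l > 0")
  case True
  have Pc: "P \<in> carrier_mat N N" using P unfolding orth_proj_def by auto
  define k where "k = complex_of_real (1 / sqrt l)"
  have WP: "(k \<cdot>\<^sub>m V) * P = k \<cdot>\<^sub>m V" using V Pc VP by (simp add: sq_simps)
  have "unitary_on_code N P (k \<cdot>\<^sub>m V)"
    unfolding unitary_on_code_def WP
  proof (intro conjI)
    show "P * (k \<cdot>\<^sub>m V) = k \<cdot>\<^sub>m V" using V Pc PV by (simp add: sq_simps)
    have "cnj k * k * complex_of_real l = 1" unfolding k_def using True by (simp flip: of_real_mult)
    then show "adj (k \<cdot>\<^sub>m V) * (k \<cdot>\<^sub>m V) = P"
      unfolding adj_smult using V Pc VV by (simp add: smult_mult_smult[of _ N])
  qed (use V in simp)
  moreover have "complex_of_real (sqrt l) * k = 1" unfolding k_def using True by (simp flip: of_real_mult)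
  then have "V = complex_of_real (sqrt l) \<cdot>\<^sub>m ((k \<cdot>\<^sub>m V) * P)" unfolding WP by simp
  ultimately show thesis by (rule that)
next
  case False
  then have "l = 0" using l by simp
  moreover have "P \<in> carrier_mat N N" using P unfolding orth_proj_def by auto
  ultimately have "trace (adj V * V) = 0" using VV by (simp add: trace_smult[of _ N])
  then have "V = 0\<^sub>m N N" using trace_adj_mult_self_eq_0[OF V] by simp
  moreover have "unitary_on_code N P (1\<^sub>m N)"
    using P unfolding unitary_on_code_def orth_proj_def by auto
  moreover have "0\<^sub>m N N = (0::complex) \<cdot>\<^sub>m (1\<^sub>m N * P)"
    using P unfolding orth_proj_def by (intro eq_matI) auto
  ultimately show thesis using that[of "1\<^sub>m N"] \<open>l = 0\<close> by simp
qed

text \<open>Otherwise \<open>P (1 + Q)/2 (1 + R)/2\<close> would be a projector of trace \<open>1/2\<close>, while nonzero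
  projectors have trace at least \<open>1\<close>.\<close>

lemma no_independent_commuting_involutions:
  assumes P: "orth_proj N P" "trace P = 2"
    and Q: "Q \<in> carrier_mat N N" "adj Q = Q" "Q * Q = 1\<^sub>m N"
    and R: "R \<in> carrier_mat N N" "adj R = R" "R * R = 1\<^sub>m N"
    and QR: "Q * R = R * Q" and PQ: "Q * P = P * Q" and PR: "R * P = P * R"
    and tr: "trace (P * Q) = 0" "trace (P * R) = 0" "trace (P * (Q * R)) = 0"
  shows False
proof -
  have Pc: "P \<in> carrier_mat N N" using P unfolding orth_proj_def by auto
  define H1 where "H1 = (1/2) \<cdot>\<^sub>m (1\<^sub>m N + 1 \<cdot>\<^sub>m Q)"
  define H2 where "H2 = (1/2) \<cdot>\<^sub>m (1\<^sub>m N + 1 \<cdot>\<^sub>m R)"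
  define F where "F i = (if i = 0 then P else if i = 1 then H1 else H2)" for i :: nat
  have H2c: "H2 \<in> carrier_mat N N" unfolding H2_def using R by simp
  have "orth_proj N (mat_prodl N F [0, 1, 2])"
  proof (rule orth_proj_mat_prodl)
    fix i assume "i \<in> set [0, 1, (2::nat)]"
    then show "orth_proj N (F i)"
      unfolding F_def H1_def H2_def using P Q R by (auto intro!: orth_proj_half_one_plus)
  next
    have "P * H1 = H1 * P" "P * H2 = H2 * P"
      unfolding H1_def H2_def
      using commute_affine[OF Pc Q(1) PQ[symmetric]] commute_affine[OF Pc R(1) PR[symmetric]] by blast+
    moreover have "H1 * H2 = H2 * H1"
      unfolding H1_def H2_def using Q R QR by (intro affine_commute_affine) auto
    ultimately show "F i * F j = F j * F i" if "i \<in> set [0, 1, (2::nat)]" "j \<in> set [0, 1, (2::nat)]" for i j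
      using that unfolding F_def by auto
  qed
  moreover have "trace (mat_prodl N F [0, 1, 2]) = complex_of_real (1/2)"
  proof -
    have "H1 * H2 = (1/4) \<cdot>\<^sub>m (1\<^sub>m N + Q + R + Q * R)"
      unfolding H1_def H2_def using Q R by (simp add: smult_mult_smult[of _ N] one_plus_mult)
    then have "trace (mat_prodl N F [0, 1, 2])
        = (1/4) * (trace P + trace (P * Q) + trace (P * R) + trace (P * (Q * R)))"
      unfolding F_def using Pc Q R H2c by (simp add: sq_simps)
    then show ?thesis unfolding P(2) tr by simp
  qed
  ultimately obtain t where "t \<ge> 1" "complex_of_real t = complex_of_real (1/2)"
    using trace_orth_proj_ge_1 by (metis zero_neq_numeral divide_eq_0_iff of_real_eq_0_iff one_neq_zero)
  then show False by (simp only: of_real_eq_iff)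
qed

end

section \<open>Stabilizer codes encoding one qubit\<close>

locale stabilizer_code = qubits +
  fixes m :: nat and g :: "nat \<Rightarrow> complex mat"
  assumes Suc_m: "Suc m = n"
    and gens: "stabilizer_generators n m g"
begin

abbreviation "S \<equiv> stab_group n m g"

lemma gen_pauli: "i < m \<Longrightarrow> g i \<in> pauli_ops n"
  using gens unfolding stabilizer_generators_def by auto

lemma gen_commute: "i < m \<Longrightarrow> j < m \<Longrightarrow> g i * g j = g j * g i"
  using gens unfolding stabilizer_generators_def by auto

lemma minus_one_not_in_stab: "- 1\<^sub>m N \<notin> S"
  using gens unfolding stabilizer_generators_def by auto

lemma gens_independent: "A \<subseteq> {..<m} \<Longrightarrow> prod_subset n m g A = 1\<^sub>m N \<Longrightarrow> A = {}"
  using gens unfolding stabilizer_generators_def by auto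

lemma gen_carrier: "i < m \<Longrightarrow> g i \<in> carrier_mat N N"
proof -
  assume "i < m"
  then obtain c p where "g i = c \<cdot>\<^sub>m pauli_mat n p" using gen_pauli unfolding pauli_ops_def by blast
  then show ?thesis by simp
qed

lemma gens_carrier: "g ` {..<m} \<subseteq> carrier_mat N N"
  using gen_carrier by auto

lemma stab_carrier: "M \<in> S \<Longrightarrow> M \<in> carrier_mat N N"
  unfolding stab_group_def by (rule gen_group_carrier[OF gens_carrier])

lemma one_in_stab: "1\<^sub>m N \<in> S"
  unfolding stab_group_def by (rule gen_one)

lemma gen_in_stab: "i < m \<Longrightarrow> g i \<in> S"
  unfolding stab_group_def by (rule generator_in_gen_group[OF gens_carrier]) simp

lemma stab_mult: "M1 \<in> S \<Longrightarrow> M2 \<in> S \<Longrightarrow> M1 * M2 \<in> S"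
  unfolding stab_group_def by (rule gen_group_mult[OF gens_carrier])

lemma gen_real_pauli: "i < m \<Longrightarrow> \<exists>c q. c \<in> {1, -1} \<and> g i = c \<cdot>\<^sub>m pauli_mat n q"
proof -
  assume i: "i < m"
  obtain c q where c: "c \<in> phases" "g i = c \<cdot>\<^sub>m pauli_mat n q"
    using gen_pauli[OF i] unfolding pauli_ops_def by auto
  have sq: "g i * g i = (c * c) \<cdot>\<^sub>m 1\<^sub>m N"
    unfolding c(2) by (simp add: smult_mult_smult[of _ N] pauli_mat_square)
  have "g i * g i \<in> S" using i by (intro stab_mult gen_in_stab)
  moreover have "c \<notin> {1, -1} \<Longrightarrow> c * c = -1" using c(1) unfolding phases_def by auto
  ultimately have "c \<in> {1, -1}" using minus_one_not_in_stab sq uminus_one_mat by (metis)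
  then show ?thesis using c by auto
qed

lemma gen_square: "i < m \<Longrightarrow> g i * g i = 1\<^sub>m N"
proof -
  assume i: "i < m"
  obtain c q where c: "c \<in> {1, -1}" "g i = c \<cdot>\<^sub>m pauli_mat n q" using gen_real_pauli[OF i] by blast
  have "g i * g i = (c * c) \<cdot>\<^sub>m 1\<^sub>m N"
    unfolding c(2) by (simp add: smult_mult_smult[of _ N] pauli_mat_square)
  then show ?thesis using c by auto
qed

lemma adj_gen: "i < m \<Longrightarrow> adj (g i) = g i"
proof -
  assume i: "i < m"
  obtain c q where c: "c \<in> {1, -1}" "g i = c \<cdot>\<^sub>m pauli_mat n q" using gen_real_pauli[OF i] by blast
  show ?thesis unfolding c(2) adj_smult adj_pauli_mat using c by auto
qed

lemma stab_pauli: "M \<in> S \<Longrightarrow> \<exists>c q. c \<in> phases \<and> M = c \<cdot>\<^sub>m pauli_mat n q"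
  unfolding stab_group_def
proof (induction M rule: gen_group.induct)
  case gen_one
  have "1\<^sub>m N = 1 \<cdot>\<^sub>m pauli_mat n (\<lambda>_. PI)" by (simp add: pauli_mat_id)
  moreover have "(1::complex) \<in> phases" by (simp add: phases_def)
  ultimately show ?case by blast
next
  case (gen_mult h M)
  then obtain i where i: "i < m" "h = g i" by auto
  obtain c q where c: "c \<in> {1, -1}" "g i = c \<cdot>\<^sub>m pauli_mat n q" using gen_real_pauli[OF i(1)] by blast
  obtain d r where d: "d \<in> phases" "M = d \<cdot>\<^sub>m pauli_mat n r" using gen_mult by blast
  have "h * M = (c * d * (\<Prod>j<n. pauli1_mult_phase (q j) (r j))) \<cdot>\<^sub>m pauli_mat n (\<lambda>j. pauli1_mult (q j) (r j))"
    unfolding i(2) c(2) d(2) by (simp add: smult_mult_smult[of _ N] pauli_mat_mult)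
  moreover have "c * d * (\<Prod>j<n. pauli1_mult_phase (q j) (r j)) \<in> phases"
    using c(1) d(1) by (intro phases_mult prod_phases pauli1_mult_phase_in_phases) (auto simp: phases_def)
  ultimately show ?case by blast
qed

lemma prod_subset_in_stab: "prod_subset n m g A \<in> S"
proof -
  have "mat_prodl N (\<lambda>i. if i \<in> A then g i else 1\<^sub>m N) xs \<in> S" if "set xs \<subseteq> {..<m}" for xs
    using that by (induction xs) (auto intro: one_in_stab stab_mult gen_in_stab)
  then show ?thesis unfolding prod_subset_def mat_prodl_def[symmetric] by (simp add: atLeast0LessThan)
qed

definition syndrome_factor :: "bool list \<Rightarrow> nat \<Rightarrow> complex mat" where
  "syndrome_factor s i = (1 / 2 :: complex) \<cdot>\<^sub>m (1\<^sub>m N + (if s ! i then -1 else 1 :: complex) \<cdot>\<^sub>m g i)"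

lemma syndrome_proj_prodl: "syndrome_proj n m g s = mat_prodl N (syndrome_factor s) [0..<m]"
  unfolding syndrome_proj_def mat_prodl_def syndrome_factor_def ..

lemma syndrome_factor_carrier: "i < m \<Longrightarrow> syndrome_factor s i \<in> carrier_mat N N"
  unfolding syndrome_factor_def using gen_carrier by simp

lemma syndrome_proj_carrier: "syndrome_proj n m g s \<in> carrier_mat N N"
  unfolding syndrome_proj_prodl by (rule mat_prodl_carrier) (auto simp: syndrome_factor_carrier)

lemma orth_proj_syndrome_factor: assumes i: "i < m" shows "orth_proj N (syndrome_factor s i)"
proof -
  define e :: complex where "e = (if s ! i then -1 else 1)"
  have e2: "e * e = 1" unfolding e_def by auto
  have ec: "cnj e = e" unfolding e_def by auto
  have gc: "g i \<in> carrier_mat N N" using gen_carrier[OF i] .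
  have M: "(e \<cdot>\<^sub>m g i) * (e \<cdot>\<^sub>m g i) = 1\<^sub>m N"
    using gc gen_square[OF i] e2 by (simp add: smult_mult_smult[of _ N])
  have X: "(1\<^sub>m N + e \<cdot>\<^sub>m g i) * (1\<^sub>m N + e \<cdot>\<^sub>m g i) = 2 \<cdot>\<^sub>m (1\<^sub>m N + e \<cdot>\<^sub>m g i)"
    using gc M by (intro one_mult_sq) auto
  have "syndrome_factor s i * syndrome_factor s i = (1/2 * (1/2)) \<cdot>\<^sub>m ((1\<^sub>m N + e \<cdot>\<^sub>m g i) * (1\<^sub>m N + e \<cdot>\<^sub>m g i))"
    unfolding syndrome_factor_def e_def[symmetric] using gc by (intro smult_mult_smult) auto
  also have "\<dots> = syndrome_factor s i" unfolding X syndrome_factor_def e_def[symmetric] by simp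
  finally have idem: "syndrome_factor s i * syndrome_factor s i = syndrome_factor s i" .
  have "adj (syndrome_factor s i) = syndrome_factor s i"
    unfolding syndrome_factor_def e_def[symmetric] using gc ec adj_gen[OF i]
    by (simp add: adj_smult adj_add[of _ N N])
  then show ?thesis using idem syndrome_factor_carrier[OF i] unfolding orth_proj_def by simp
qed

lemma syndrome_factor_commute: "i < m \<Longrightarrow> j < m \<Longrightarrow> syndrome_factor s i * syndrome_factor t j = syndrome_factor t j * syndrome_factor s i"
  unfolding syndrome_factor_def by (intro affine_commute_affine gen_carrier gen_commute)

lemma orth_proj_syndrome_proj: "orth_proj N (syndrome_proj n m g s)"
  unfolding syndrome_proj_prodl by (rule orth_proj_mat_prodl) (auto simp: orth_proj_syndrome_factor syndrome_factor_commute)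

lemma gen_syndrome_factor_commute: "i < m \<Longrightarrow> j < m \<Longrightarrow> g i * syndrome_factor s j = syndrome_factor s j * g i"
  unfolding syndrome_factor_def by (rule commute_affine) (auto intro: gen_carrier gen_commute)

abbreviation "P0 \<equiv> syndrome_proj n m g (replicate m False)"

lemma gen_mult_P0: assumes i: "i < m" shows "g i * P0 = P0"
proof -
  have gc: "g i \<in> carrier_mat N N" using gen_carrier[OF i] .
  have "g i * syndrome_factor (replicate m False) i = syndrome_factor (replicate m False) i"
  proof -
    have "g i * syndrome_factor (replicate m False) i = (1/2) \<cdot>\<^sub>m (g i * 1\<^sub>m N + g i * g i)"
      unfolding syndrome_factor_def using i gc
      by (simp add: sq_simps)
    then show ?thesis unfolding syndrome_factor_def using i gc gen_square[OF i] by (intro eq_matI) auto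
  qed
  then show ?thesis unfolding syndrome_proj_prodl using i
    by (intro mat_prodl_absorb[of _ _ _ _ i]) (auto simp: syndrome_factor_carrier gc gen_syndrome_factor_commute)
qed

lemma P0_mult_gen: assumes i: "i < m" shows "P0 * g i = P0"
proof -
  have "adj (g i * P0) = P0" using gen_mult_P0[OF i] orth_proj_syndrome_proj unfolding orth_proj_def by simp
  then show ?thesis using adj_gen[OF i] orth_proj_syndrome_proj syndrome_proj_carrier gen_carrier[OF i] unfolding orth_proj_def
    by (simp add: adj_mult[of _ N N _ N])
qed

lemma stab_mult_P0: "M \<in> S \<Longrightarrow> M * P0 = P0"
  unfolding stab_group_def
  by (rule gen_group_mult_absorb[OF gens_carrier syndrome_proj_carrier]) (auto simp: gen_mult_P0)

lemma P0_carrier: "P0 \<in> carrier_mat N N"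
  by (rule syndrome_proj_carrier)

lemma stab_commute:
  assumes "P \<in> carrier_mat N N" "\<And>i. i < m \<Longrightarrow> g i * P = P * g i" "M \<in> S"
  shows "M * P = P * M"
proof -
  have "h * P = P * h" if "h \<in> g ` {..<m}" for h using that assms(2) by blast
  then show ?thesis
    using gen_group_commute[OF gens_carrier assms(1)] assms(3) unfolding stab_group_def by blast
qed

lemma P0_commute: assumes Pc: "P \<in> carrier_mat N N" and gc: "\<And>i. i < m \<Longrightarrow> g i * P = P * g i"
  shows "P * P0 = P0 * P"
  unfolding syndrome_proj_prodl
proof (rule mat_prodl_commute)
  fix i assume "i \<in> set [0..<m]"
  then have i: "i < m" by simp
  show "P * syndrome_factor (replicate m False) i = syndrome_factor (replicate m False) i * P"
    unfolding syndrome_factor_def using gen_carrier[OF i] Pc gc[OF i] by (intro commute_affine) auto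
qed (use Pc syndrome_factor_carrier in auto)

subsection \<open>The code space is two-dimensional\<close>

lemma trace_mult_P0_expand: assumes P: "P \<in> carrier_mat N N"
  shows "trace (P * P0) = (1/2) ^ m * (\<Sum>A\<in>Pow {0..<m}. trace (P * prod_subset n m g A))"
proof -
  have "P0 = mat_prodl N (\<lambda>i. (1/2) \<cdot>\<^sub>m (1\<^sub>m N + g i)) [0..<m]"
    unfolding syndrome_proj_prodl by (intro mat_prodl_cong) (auto simp: syndrome_factor_def)
  moreover have "prod_subset n m g A = mat_prodl N (\<lambda>i. if i \<in> A then g i else 1\<^sub>m N) [0..<m]" for A
    unfolding prod_subset_def mat_prodl_def ..
  ultimately show ?thesis using trace_mult_prod_averages[of "[0..<m]" g N P] P gen_carrier by simp
qed

lemma trace_pauli_mult_stab: assumes M: "M \<in> S" and nt: "\<forall>c\<in>phases. c \<cdot>\<^sub>m pauli_mat n p \<notin> S"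
  shows "trace (pauli_mat n p * M) = 0"
proof -
  obtain c q where c: "c \<in> phases" "M = c \<cdot>\<^sub>m pauli_mat n q" using stab_pauli[OF M] by blast
  have "trace (pauli_mat n p * M) = c * ((\<Prod>j<n. pauli1_mult_phase (p j) (q j)) * trace (pauli_mat n (\<lambda>j. pauli1_mult (p j) (q j))))"
    unfolding c(2) by (simp add: mult_smult_distrib[of _ N N _ N] pauli_mat_mult trace_smult[of _ N])
  moreover have "\<not> (\<forall>j<n. pauli1_mult (p j) (q j) = PI)"
  proof
    assume "\<forall>j<n. pauli1_mult (p j) (q j) = PI"
    then have "pauli_mat n p = pauli_mat n q" by (intro pauli_mat_cong) (auto simp: pauli1_mult_eq_PI_iff)
    then show False using nt c M by auto
  qed
  ultimately show ?thesis by (simp add: trace_pauli_mat)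
qed

lemma trace_pauli_mult_P0: assumes nt: "\<forall>c\<in>phases. c \<cdot>\<^sub>m pauli_mat n p \<notin> S"
  shows "trace (pauli_mat n p * P0) = 0"
  unfolding trace_mult_P0_expand[OF pauli_mat_carrier] using trace_pauli_mult_stab[OF prod_subset_in_stab nt] by simp

lemma phase_in_stab_eq_1:
  assumes c: "c \<in> phases" and cS: "c \<cdot>\<^sub>m 1\<^sub>m N \<in> S"
  shows "c = 1"
proof -
  have "c \<noteq> -1" using cS minus_one_not_in_stab uminus_one_mat by metis
  moreover have "c * c \<noteq> -1"
  proof
    assume "c * c = -1"
    moreover have "(c \<cdot>\<^sub>m 1\<^sub>m N) * (c \<cdot>\<^sub>m 1\<^sub>m N) = (c * c) \<cdot>\<^sub>m 1\<^sub>m N"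
      by (simp add: smult_mult_smult[of _ N])
    ultimately have "- 1\<^sub>m N \<in> S" using stab_mult[OF cS cS] uminus_one_mat by simp
    then show False using minus_one_not_in_stab by simp
  qed
  ultimately show ?thesis using c unfolding phases_def by auto
qed

lemma trace_prod_subset:
  assumes "A \<subseteq> {..<m}" "A \<noteq> {}"
  shows "trace (prod_subset n m g A) = 0"
proof -
  obtain c q where c: "c \<in> phases" "prod_subset n m g A = c \<cdot>\<^sub>m pauli_mat n q"
    using stab_pauli[OF prod_subset_in_stab] by blast
  show ?thesis
  proof (cases "\<forall>j<n. q j = PI")
    case True
    then have "prod_subset n m g A = c \<cdot>\<^sub>m 1\<^sub>m N" unfolding c(2) by (simp add: pauli_mat_id)
    moreover from this have "c = 1" using phase_in_stab_eq_1[OF c(1)] prod_subset_in_stab[of A] by simp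
    ultimately show ?thesis using gens_independent assms by simp
  qed (auto simp: c(2) trace_smult[of _ N] trace_pauli_mat)
qed

lemma prod_subset_empty: "prod_subset n m g {} = 1\<^sub>m N"
proof -
  have "mat_prodl N (\<lambda>i. 1\<^sub>m N) xs = 1\<^sub>m N" for xs by (induction xs) auto
  then show ?thesis unfolding prod_subset_def mat_prodl_def[symmetric] by simp
qed

text \<open>Only the empty subproduct of \<open>\<Prod>\<^sub>i (1 + g\<^sub>i)/2\<close> has nonzero trace, so the code space has
  dimension \<open>2\<^sup>n / 2\<^sup>m = 2\<close>.\<close>

lemma trace_P0: "trace P0 = 2"
proof -
  have one: "1\<^sub>m N * prod_subset n m g A = prod_subset n m g A" for A
    using stab_carrier[OF prod_subset_in_stab[of A]] by simp
  have "(\<Sum>A\<in>Pow {0..<m}. trace (1\<^sub>m N * prod_subset n m g A)) = of_nat N"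
    unfolding one using prod_subset_empty trace_prod_subset
    by (subst sum.remove[of _ "{}"]) (auto intro!: sum.neutral simp: atLeast0LessThan)
  then have "trace P0 = (1/2) ^ m * of_nat N"
    using trace_mult_P0_expand[of "1\<^sub>m N"] P0_carrier by simp
  also have "\<dots> = 2" using Suc_m[symmetric] by (simp add: power_divide)
  finally show ?thesis .
qed

lemma syndrome_proj_prodl_upto: "syndrome_proj n k g s = mat_prodl N (syndrome_factor s) [0..<k]"
  unfolding syndrome_proj_def mat_prodl_def syndrome_factor_def ..

lemma syndromes_Suc: "syndromes (Suc k) = (\<lambda>(t, b). t @ [b]) ` (syndromes k \<times> UNIV)"
proof -
  have "s \<in> (\<lambda>(t, b). t @ [b]) ` (syndromes k \<times> UNIV)" if "length s = Suc k" for s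
  proof -
    have "s = butlast s @ [last s]" using that by (metis append_butlast_last_id list.size(3) nat.distinct(1))
    moreover have "butlast s \<in> syndromes k" using that unfolding syndromes_def by simp
    ultimately show ?thesis by force
  qed
  then show ?thesis unfolding syndromes_def by auto
qed

lemma syndrome_proj_upto_carrier: "k \<le> m \<Longrightarrow> syndrome_proj n k g t \<in> carrier_mat N N"
  unfolding syndrome_proj_prodl_upto by (intro mat_prodl_carrier) (auto simp: syndrome_factor_carrier)

lemma syndrome_proj_snoc:
  assumes k: "k < m" and t: "t \<in> syndromes k"
  shows "syndrome_proj n (Suc k) g (t @ [b]) = syndrome_proj n k g t * syndrome_factor (t @ [b]) k"
proof -
  have "syndrome_proj n (Suc k) g (t @ [b]) = mat_prodl N (syndrome_factor (t @ [b])) ([0..<k] @ [k])"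
    unfolding syndrome_proj_prodl_upto by simp
  also have "\<dots> = mat_prodl N (syndrome_factor (t @ [b])) [0..<k] * syndrome_factor (t @ [b]) k"
    using k by (intro mat_prodl_append) (auto simp: syndrome_factor_carrier)
  also have "mat_prodl N (syndrome_factor (t @ [b])) [0..<k] = mat_prodl N (syndrome_factor t) [0..<k]"
    using t unfolding syndromes_def by (intro mat_prodl_cong) (auto simp: syndrome_factor_def nth_append)
  finally show ?thesis unfolding syndrome_proj_prodl_upto .
qed

lemma syndrome_factor_True_add_False:
  "k < m \<Longrightarrow> t \<in> syndromes k \<Longrightarrow> syndrome_factor (t @ [True]) k + syndrome_factor (t @ [False]) k = 1\<^sub>m N"
proof -
  assume "k < m" "t \<in> syndromes k"
  then show ?thesis
    using gen_carrier[of k] unfolding syndromes_def syndrome_factor_def by (intro eq_matI) (auto simp: field_simps)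
qed

lemma sum_trace_syndrome_proj: assumes M: "M \<in> carrier_mat N N"
  shows "k \<le> m \<Longrightarrow> (\<Sum>s\<in>syndromes k. trace (syndrome_proj n k g s * M)) = trace M"
proof (induction k)
  case 0
  have "syndromes 0 = {[]}" unfolding syndromes_def by auto
  then show ?case using M by (simp add: syndrome_proj_def)
next
  case (Suc k)
  have k: "k < m" using Suc.prems by simp
  have "inj_on (\<lambda>(t, b). t @ [b]) (syndromes k \<times> (UNIV :: bool set))"
    unfolding inj_on_def by auto
  then have "(\<Sum>s\<in>syndromes (Suc k). trace (syndrome_proj n (Suc k) g s * M))
      = (\<Sum>t\<in>syndromes k. \<Sum>b\<in>UNIV. trace (syndrome_proj n (Suc k) g (t @ [b]) * M))"
    unfolding syndromes_Suc by (simp add: sum.reindex sum.cartesian_product split_def)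
  also have "\<dots> = (\<Sum>t\<in>syndromes k. trace (syndrome_proj n k g t * M))"
  proof (intro sum.cong refl)
    fix t assume t: "t \<in> syndromes k"
    define F where "F b = syndrome_factor (t @ [b]) k" for b
    have c: "syndrome_proj n k g t \<in> carrier_mat N N" "F b \<in> carrier_mat N N" for b
      using k syndrome_proj_upto_carrier unfolding F_def by (auto simp: syndrome_factor_carrier)
    have "(\<Sum>b\<in>UNIV. trace (syndrome_proj n (Suc k) g (t @ [b]) * M))
        = trace (syndrome_proj n k g t * F True * M + syndrome_proj n k g t * F False * M)"
      using syndrome_proj_snoc[OF k t] c M unfolding F_def[symmetric] by (simp add: UNIV_bool sq_tr_add)
    also have "\<dots> = trace (syndrome_proj n k g t * (F True + F False) * M)"
      using c M by (simp add: sq_simps)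
    finally show "(\<Sum>b\<in>UNIV. trace (syndrome_proj n (Suc k) g (t @ [b]) * M)) = trace (syndrome_proj n k g t * M)"
      using syndrome_factor_True_add_False[OF k t] c unfolding F_def by simp
  qed
  also have "\<dots> = trace M" using Suc by simp
  finally show ?case .
qed

lemma gen_pauli_comm_sign: assumes i: "i < m"
  shows "\<exists>e\<in>{1, -1}. g i * pauli_mat n p = e \<cdot>\<^sub>m (pauli_mat n p * g i)"
proof -
  obtain c q where c: "c \<in> {1, -1}" "g i = c \<cdot>\<^sub>m pauli_mat n q" using gen_real_pauli[OF i] by blast
  obtain e where e: "e \<in> {1, -1}" "pauli_mat n q * pauli_mat n p = e \<cdot>\<^sub>m (pauli_mat n p * pauli_mat n q)"
    using pauli_mat_comm_sign by blast
  have "g i * pauli_mat n p = c \<cdot>\<^sub>m (pauli_mat n q * pauli_mat n p)" unfolding c(2) by (simp add: sq_simps)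
  also have "\<dots> = e \<cdot>\<^sub>m (pauli_mat n p * g i)" unfolding e(2) c(2) by (simp add: sq_simps ac_simps)
  finally show ?thesis using e(1) by blast
qed

text \<open>Either the string anticommutes with some generator \<open>g\<^sub>i\<close>, and then
  \<open>P0 Q P0 = P0 Q g\<^sub>i P0 = - P0 g\<^sub>i Q P0 = - P0 Q P0\<close>, or it commutes with \<open>S\<close> and hence lies in \<open>S\<close>
  up to a phase.\<close>


lemma P0_pauli_P0_scalar:
  assumes "\<not> nontrivial_logical n S p"
  shows "\<exists>l. P0 * pauli_mat n p * P0 = l \<cdot>\<^sub>m P0"
proof (cases "\<forall>i<m. g i * pauli_mat n p = pauli_mat n p * g i")
  case True
  then have "\<forall>M\<in>S. M * pauli_mat n p = pauli_mat n p * M" using stab_commute[of "pauli_mat n p"] by simp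
  then obtain c where c: "c \<in> phases" "c \<cdot>\<^sub>m pauli_mat n p \<in> S"
    using assms unfolding nontrivial_logical_def by blast
  have "c \<cdot>\<^sub>m (pauli_mat n p * P0) = P0" using stab_mult_P0[OF c(2)] P0_carrier by (simp add: sq_simps)
  then have "(1 / c) \<cdot>\<^sub>m (c \<cdot>\<^sub>m (pauli_mat n p * P0)) = (1 / c) \<cdot>\<^sub>m P0" by simp
  then have QP: "pauli_mat n p * P0 = (1 / c) \<cdot>\<^sub>m P0" using phases_nonzero[OF c(1)] by simp
  have "P0 * pauli_mat n p * P0 = P0 * ((1 / c) \<cdot>\<^sub>m P0)" using P0_carrier by (simp add: sq_assoc QP)
  also have "\<dots> = (1 / c) \<cdot>\<^sub>m P0"
    using P0_carrier orth_proj_syndrome_proj unfolding orth_proj_def by (simp add: sq_simps)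
  finally show ?thesis by blast
next
  case False
  then obtain i where i: "i < m" "g i * pauli_mat n p \<noteq> pauli_mat n p * g i" by blast
  obtain e where e: "e \<in> {1, -1}" "g i * pauli_mat n p = e \<cdot>\<^sub>m (pauli_mat n p * g i)"
    using gen_pauli_comm_sign[OF i(1)] by blast
  have gc: "g i \<in> carrier_mat N N" using gen_carrier[OF i(1)] .
  have Qg: "pauli_mat n p * g i = (-1) \<cdot>\<^sub>m (g i * pauli_mat n p)"
    using e i(2) gc by auto
  define X where "X = P0 * pauli_mat n p * P0"
  have Xc: "X \<in> carrier_mat N N" unfolding X_def using P0_carrier by simp
  have "X = P0 * pauli_mat n p * (g i * P0)" unfolding X_def gen_mult_P0[OF i(1)] ..
  also have "\<dots> = P0 * (pauli_mat n p * g i) * P0" using P0_carrier gc by (simp add: sq_assoc)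
  also have "\<dots> = (-1) \<cdot>\<^sub>m ((P0 * g i) * pauli_mat n p * P0)"
    unfolding Qg using P0_carrier gc by (simp add: sq_simps sq_assoc)
  also have "\<dots> = (-1) \<cdot>\<^sub>m X" unfolding P0_mult_gen[OF i(1)] X_def ..
  finally have "X = 0\<^sub>m N N" using Xc by (intro eq_0_if_eq_uminus) auto
  then have "P0 * pauli_mat n p * P0 = 0 \<cdot>\<^sub>m P0" unfolding X_def using P0_carrier by (intro eq_matI) auto
  then show ?thesis by blast
qed

lemma ex_z_logical: "\<exists>p. z_type n p \<and> nontrivial_logical n S p"
proof (rule ccontr)
  assume "\<not> (\<exists>p. z_type n p \<and> nontrivial_logical n S p)"
  moreover have "z_type n (\<lambda>j. if qbit j u = 1 then PZ else PI)" for u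
    unfolding z_type_def by auto
  ultimately have "\<forall>u. \<exists>l. P0 * z_string u * P0 = l \<cdot>\<^sub>m P0"
    unfolding z_string_def using P0_pauli_P0_scalar by blast
  then obtain lam where lam: "\<And>u. P0 * z_string u * P0 = lam u \<cdot>\<^sub>m P0" by metis
  have "trace P0 = 1"
    by (rule trace_orth_proj_z_string_scalar[OF orth_proj_syndrome_proj lam]) (simp add: trace_P0)
  then show False using trace_P0 by simp
qed

lemma not_in_stab_if_anticommutes:
  assumes q: "nontrivial_logical n S q"
    and anti: "pauli_mat n q * pauli_mat n r = (-1) \<cdot>\<^sub>m (pauli_mat n r * pauli_mat n q)"
  shows "\<forall>c\<in>phases. c \<cdot>\<^sub>m pauli_mat n r \<notin> S"
proof (intro ballI notI)
  fix c assume c: "c \<in> phases" "c \<cdot>\<^sub>m pauli_mat n r \<in> S"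
  define Q where "Q = pauli_mat n q"
  define R where "R = pauli_mat n r"
  have Qc: "Q \<in> carrier_mat N N" and Rc: "R \<in> carrier_mat N N" unfolding Q_def R_def by simp_all
  have "(c \<cdot>\<^sub>m R) * Q = Q * (c \<cdot>\<^sub>m R)" using q c unfolding nontrivial_logical_def Q_def R_def by blast
  then have "c \<cdot>\<^sub>m (R * Q) = c \<cdot>\<^sub>m (Q * R)" using Qc Rc by (simp add: sq_simps)
  then have "(1 / c) \<cdot>\<^sub>m (c \<cdot>\<^sub>m (R * Q)) = (1 / c) \<cdot>\<^sub>m (c \<cdot>\<^sub>m (Q * R))" by simp
  then have RQ: "R * Q = Q * R" using phases_nonzero[OF c(1)] by simp
  have "R * Q = (-1) \<cdot>\<^sub>m (R * Q)" using anti RQ unfolding Q_def R_def by simp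
  then have z: "R * Q = 0\<^sub>m N N" using Qc Rc by (intro eq_0_if_eq_uminus) auto
  have "(R * Q) * (Q * R) = 1\<^sub>m N"
  proof -
    have "(R * Q) * (Q * R) = R * ((Q * Q) * R)" using Qc Rc by (simp add: sq_assoc)
    also have "Q * Q = 1\<^sub>m N" unfolding Q_def by (rule pauli_mat_square)
    finally show ?thesis using Rc unfolding R_def by (simp add: pauli_mat_square)
  qed
  then show False using z one_mat_neq_zero_mat Qc Rc by simp
qed

lemma commuting_logicals_product_in_stab:
  assumes p: "nontrivial_logical n S p" and q: "nontrivial_logical n S q"
    and comm: "pauli_mat n p * pauli_mat n q = pauli_mat n q * pauli_mat n p"
    and r: "pauli_mat n p * pauli_mat n q = pauli_mat n r"
  shows "\<exists>c\<in>phases. c \<cdot>\<^sub>m pauli_mat n r \<in> S"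
proof (rule ccontr)
  assume r_nt: "\<not> (\<exists>c\<in>phases. c \<cdot>\<^sub>m pauli_mat n r \<in> S)"
  define Q where "Q = pauli_mat n p"
  define R where "R = pauli_mat n q"
  have Q: "Q \<in> carrier_mat N N" "adj Q = Q" "Q * Q = 1\<^sub>m N" and R: "R \<in> carrier_mat N N" "adj R = R" "R * R = 1\<^sub>m N"
    unfolding Q_def R_def by (simp_all add: adj_pauli_mat pauli_mat_square)
  have "trace (Q * P0) = 0" "trace (R * P0) = 0" "trace ((Q * R) * P0) = 0"
    using trace_pauli_mult_P0 p q r_nt unfolding Q_def R_def r nontrivial_logical_def by blast+
  then have "trace (P0 * Q) = 0" "trace (P0 * R) = 0" "trace (P0 * (Q * R)) = 0"
    using trace_mult_comm[OF P0_carrier] Q(1) R(1) by (metis mult_carrier_mat)+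
  moreover have "Q * P0 = P0 * Q" "R * P0 = P0 * R"
    using P0_commute gen_in_stab p q unfolding Q_def R_def nontrivial_logical_def by auto
  ultimately show False
    using no_independent_commuting_involutions[OF orth_proj_syndrome_proj trace_P0 Q R] comm
    unfolding Q_def R_def by blast
qed

definition syndrome_sandwich :: "complex mat \<Rightarrow> bool list \<Rightarrow> complex mat" where
  "syndrome_sandwich U s = P0 * (adj U * (syndrome_proj n m g s * (U * P0)))"

lemma sum_trace_syndrome_sandwich:
  assumes U: "U \<in> carrier_mat N N" "adj U * U = 1\<^sub>m N"
  shows "(\<Sum>s\<in>syndromes m. trace (syndrome_sandwich U s)) = 2"
proof -
  have P0: "P0 \<in> carrier_mat N N" "P0 * P0 = P0"
    using orth_proj_syndrome_proj unfolding orth_proj_def by auto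
  have "trace (syndrome_sandwich U s) = trace (syndrome_proj n m g s * (U * (P0 * adj U)))" for s
  proof -
    have "trace (syndrome_sandwich U s) = trace ((P0 * adj U) * (syndrome_proj n m g s * (U * P0)))"
      unfolding syndrome_sandwich_def using P0 U syndrome_proj_carrier by (simp add: sq_assoc)
    also have "\<dots> = trace ((syndrome_proj n m g s * (U * P0)) * (P0 * adj U))"
      by (rule trace_mult_comm[of _ N N]) (use P0 U syndrome_proj_carrier in auto)
    also have "\<dots> = trace (syndrome_proj n m g s * (U * (P0 * adj U)))"
      using P0 U syndrome_proj_carrier by (simp add: sq_assoc idem_mult_left)
    finally show ?thesis .
  qed
  then have "(\<Sum>s\<in>syndromes m. trace (syndrome_sandwich U s)) = trace (U * (P0 * adj U))"
    using sum_trace_syndrome_proj[of "U * (P0 * adj U)" m] P0 U by simp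
  also have "\<dots> = trace ((P0 * adj U) * U)" using P0 U by (intro trace_mult_comm) auto
  also have "\<dots> = 2" using P0 U trace_P0 by (simp add: sq_assoc)
  finally show ?thesis .
qed

lemma recovered_branch:
  assumes C: "C \<in> pauli_ops n" and rec: "syndrome_proj n m g s * C = C * P0"
    and U: "U \<in> carrier_mat N N"
  defines "V \<equiv> C * syndrome_proj n m g s * U * P0"
  shows "adj V * V = syndrome_sandwich U s" and "P0 * V = V" and "V * P0 = V"
proof -
  define Pi where "Pi = syndrome_proj n m g s"
  have P0: "P0 \<in> carrier_mat N N" "adj P0 = P0" "P0 * P0 = P0"
    using orth_proj_syndrome_proj unfolding orth_proj_def by auto
  have Pi: "Pi \<in> carrier_mat N N" "adj Pi = Pi" "Pi * Pi = Pi"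
    using orth_proj_syndrome_proj unfolding Pi_def orth_proj_def by auto
  have Cc: "C \<in> carrier_mat N N" using C unfolding pauli_ops_def by auto
  obtain d where d: "d \<noteq> 0" "adj C = d \<cdot>\<^sub>m C" using pauli_op_adj[OF C] by blast
  have P0C: "P0 * C = C * Pi" using intertwine_sym[OF Cc d Pi(1,2) P0(1,2)] rec unfolding Pi_def by blast
  have V: "V = C * (Pi * (U * P0))" unfolding V_def Pi_def using Cc syndrome_proj_carrier P0 U by (simp add: sq_assoc)
  have "adj V * V = P0 * (adj U * (Pi * ((adj C * C) * (Pi * (U * P0)))))"
    unfolding V using Cc Pi P0 U by (simp add: sq_adj_mult sq_assoc)
  also have "\<dots> = syndrome_sandwich U s"
    unfolding pauli_op_adj_mult[OF C] syndrome_sandwich_def Pi_def[symmetric]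
    using Pi P0 U by (simp add: idem_mult_left)
  finally show "adj V * V = syndrome_sandwich U s" .
  have "P0 * V = (P0 * C) * (Pi * (U * P0))" unfolding V using Cc Pi P0 U by (simp add: sq_assoc)
  also have "\<dots> = C * (Pi * (Pi * (U * P0)))" unfolding P0C using Cc Pi P0 U by (simp add: sq_assoc)
  also have "\<dots> = V" unfolding V using Pi P0 U by (simp add: idem_mult_left)
  finally show "P0 * V = V" .
  show "V * P0 = V" unfolding V using Cc Pi P0 U by (simp add: sq_assoc)
qed

end

locale even_css_code = stabilizer_code +
  assumes even_weight: "\<forall>M \<in> stab_group n m g. \<forall>c p.
        c \<in> phases \<and> M = c \<cdot>\<^sub>m pauli_mat n p \<longrightarrow> even (pauli_weight n p)"
    and css: "is_css n (stab_group n m g)"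
    and dx_odd: "odd (dist_x n (stab_group n m g))"
    and dz_odd: "odd (dist_z n (stab_group n m g))"
begin

subsection \<open>The number of physical qubits is odd\<close>

lemma stab_commute_Xall_Zall: "M \<in> S \<Longrightarrow> M * Xall = Xall * M \<and> M * Zall = Zall * M"
proof -
  obtain H where H: "\<forall>h\<in>H. \<exists>c p. c \<in> phases \<and> h = c \<cdot>\<^sub>m pauli_mat n p \<and> (x_type n p \<or> z_type n p)"
    and HS: "gen_group n H = S"
    using css unfolding is_css_def by blast
  have H_carrier: "H \<subseteq> carrier_mat N N" using H by fastforce
  have "h * Xall = Xall * h \<and> h * Zall = Zall * h" if h: "h \<in> H" for h
  proof -
    obtain c p where c: "c \<in> phases" "h = c \<cdot>\<^sub>m pauli_mat n p" "x_type n p \<or> z_type n p" using H h by blast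
    have "h \<in> S" using generator_in_gen_group[OF H_carrier h] HS by simp
    then have "even (pauli_weight n p)" using even_weight c by blast
    then show ?thesis using c(3) pauli_mat_comm_Xall pauli_mat_comm_Zall unfolding c(2) by (auto simp: sq_simps)
  qed
  then show "M \<in> S \<Longrightarrow> ?thesis"
    using gen_group_commute[OF H_carrier, of Xall] gen_group_commute[OF H_carrier, of Zall] HS by auto
qed

lemma ex_min_weight_logical:
  assumes "\<exists>p. t n p \<and> nontrivial_logical n S p"
  shows "\<exists>p. t n p \<and> nontrivial_logical n S p \<and>
    pauli_weight n p = (LEAST w. \<exists>p. t n p \<and> nontrivial_logical n S p \<and> pauli_weight n p = w)"
proof -
  obtain p where "t n p" "nontrivial_logical n S p" using assms by blast
  then show ?thesis
    by (intro LeastI[where P = "\<lambda>w. \<exists>p. t n p \<and> nontrivial_logical n S p \<and> pauli_weight n p = w"]) blast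
qed

text \<open>A minimum-weight Z-logical has odd weight, so it anticommutes with \<open>X\<^sup>\<otimes>\<^sup>n\<close>, which commutes
  with \<open>S\<close> by the CSS and even-weight conditions: hence \<open>X\<^sup>\<otimes>\<^sup>n\<close> is a nontrivial logical.\<close>

lemma Xall_nontrivial_logical: "nontrivial_logical n S (\<lambda>_. PX)"
proof -
  obtain zl where zl: "z_type n zl" "nontrivial_logical n S zl" "pauli_weight n zl = dist_z n S"
    using ex_min_weight_logical[of z_type, OF ex_z_logical] unfolding dist_z_def by blast
  have "pauli_mat n zl * Xall = (-1) \<cdot>\<^sub>m (Xall * pauli_mat n zl)"
    using pauli_mat_comm_Xall(1)[OF zl(1)] zl(3) dz_odd by simp
  then show ?thesis
    unfolding nontrivial_logical_def using stab_commute_Xall_Zall not_in_stab_if_anticommutes[OF zl(2)] by blast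
qed

lemma Zall_nontrivial_logical: "nontrivial_logical n S (\<lambda>_. PZ)"
proof -
  have "x_type n (\<lambda>_. PX)" unfolding x_type_def by simp
  then obtain xl where xl: "x_type n xl" "nontrivial_logical n S xl" "pauli_weight n xl = dist_x n S"
    using ex_min_weight_logical[of x_type] Xall_nontrivial_logical unfolding dist_x_def by blast
  have "pauli_mat n xl * Zall = (-1) \<cdot>\<^sub>m (Zall * pauli_mat n xl)"
    using pauli_mat_comm_Zall(1)[OF xl(1)] xl(3) dx_odd by simp
  then show ?thesis
    unfolding nontrivial_logical_def using stab_commute_Xall_Zall not_in_stab_if_anticommutes[OF xl(2)] by blast
qed

text \<open>\<open>Z\<^sup>\<otimes>\<^sup>n\<close> times a minimum-weight Z-logical is, up to a phase, a stabilizer of even weight whose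
  support is the complement of that of the odd-weight logical.\<close>

lemma odd_n: "odd n"
proof -
  obtain zl where zl: "z_type n zl" "nontrivial_logical n S zl" "pauli_weight n zl = dist_z n S"
    using ex_min_weight_logical[of z_type, OF ex_z_logical] unfolding dist_z_def by blast
  define r where "r j = pauli1_mult PZ (zl j)" for j
  have "(\<Prod>j<n. pauli1_mult_phase PZ (zl j)) = 1"
    using zl(1) unfolding z_type_def by (intro prod.neutral) auto
  then have ZZ: "Zall * pauli_mat n zl = pauli_mat n r" unfolding pauli_mat_mult r_def by simp
  have "Zall * pauli_mat n zl = pauli_mat n zl * Zall" using pauli_mat_comm_Zall(2)[OF zl(1)] by simp
  then obtain c where c: "c \<in> phases" "c \<cdot>\<^sub>m pauli_mat n r \<in> S"
    using commuting_logicals_product_in_stab[OF Zall_nontrivial_logical zl(2) _ ZZ] by blast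
  have "{j. j < n \<and> r j \<noteq> PI} = {j. j < n \<and> zl j = PI}"
    using zl(1) unfolding z_type_def r_def by auto
  then have "pauli_weight n r + pauli_weight n zl = n"
    unfolding pauli_weight_def using card_less_split[of n "\<lambda>j. zl j = PI"] by simp
  moreover have "even (pauli_weight n r)" using even_weight c by blast
  ultimately show ?thesis using zl(3) dz_odd by (metis odd_add)
qed

subsection \<open>Kramers degeneracy of the code space\<close>

lemma t_symmetric_gen: assumes i: "i < m" shows "t_symmetric (g i)"
proof -
  obtain c q where c: "c \<in> {1, -1}" "g i = c \<cdot>\<^sub>m pauli_mat n q" using gen_real_pauli[OF i] by blast
  have "c \<in> phases" using c(1) by (auto simp: phases_def)
  then have "even (pauli_weight n q)" using even_weight gen_in_stab[OF i] c(2) by blast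
  then show ?thesis unfolding c(2) using c(1) by (intro t_symmetric_smult t_symmetric_pauli_mat) auto
qed

lemma t_symmetric_syndrome_factor: "i < m \<Longrightarrow> t_symmetric (syndrome_factor s i)"
  unfolding syndrome_factor_def using gen_carrier
  by (intro t_symmetric_smult t_symmetric_add t_symmetric_one t_symmetric_gen) auto

lemma t_symmetric_syndrome_proj: "t_symmetric (syndrome_proj n m g s)"
  unfolding syndrome_proj_prodl by (rule t_symmetric_mat_prodl) (auto simp: syndrome_factor_carrier t_symmetric_syndrome_factor)

lemma Yall_square_minus_one: "Yall * Yall = - 1\<^sub>m N"
  using Yall_square odd_n uminus_one_mat by simp

lemma P0_sandwich_scalar:
  assumes U: "U \<in> carrier_mat N N" and tU: "t_symmetric U" and tUa: "t_symmetric (adj U)"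
  shows "\<exists>l::real. P0 * (adj U * (syndrome_proj n m g s * (U * P0))) = complex_of_real l \<cdot>\<^sub>m P0"
proof -
  define Pi where "Pi = syndrome_proj n m g s"
  define B where "B = P0 * (adj U * (Pi * (U * P0)))"
  have P0: "P0 \<in> carrier_mat N N" "adj P0 = P0" "P0 * P0 = P0"
    using orth_proj_syndrome_proj unfolding orth_proj_def by auto
  have Pi: "Pi \<in> carrier_mat N N" "adj Pi = Pi"
    using orth_proj_syndrome_proj unfolding Pi_def orth_proj_def by auto
  have "B \<in> carrier_mat N N" unfolding B_def using P0 Pi U by simp
  moreover have "adj B = B" unfolding B_def using P0 Pi U by (simp add: sq_adj_mult sq_assoc)
  moreover have "B * P0 = B" unfolding B_def using P0 Pi U by (simp add: sq_assoc)
  moreover have "P0 * B = B" unfolding B_def using P0 Pi U by (simp add: idem_mult_left)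
  moreover have "t_symmetric B"
    unfolding B_def Pi_def using P0 Pi U tU tUa
    by (simp add: t_symmetric_mult t_symmetric_syndrome_proj Pi_def)
  ultimately show ?thesis
    using kramers_scalar[OF orth_proj_syndrome_proj trace_P0 Yall_carrier conj_Yall Yall_square_minus_one
        Yall_unitary] t_symmetric_syndrome_proj unfolding t_symmetric_def B_def Pi_def by blast
qed

theorem syndrome_decomposition:
  fixes C :: "bool list \<Rightarrow> complex mat" and U :: "complex mat"
  assumes recovery: "\<forall>s \<in> syndromes m. C s \<in> pauli_ops n \<and> syndrome_proj n m g s * C s = C s * P0"
    and U_unitary: "unitary_mat N U"
    and T_commute: "\<forall>v \<in> carrier_vec N. U *\<^sub>v time_rev n v = time_rev n (U *\<^sub>v v)"
  shows "\<exists>p :: bool list \<Rightarrow> real. \<exists>UL :: bool list \<Rightarrow> complex mat.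
     (\<forall>s \<in> syndromes m. p s \<ge> 0) \<and>
     (\<Sum>s \<in> syndromes m. p s) = 1 \<and>
     (\<forall>s \<in> syndromes m.
        unitary_on_code N P0 (UL s) \<and>
        C s * syndrome_proj n m g s * U * P0 = complex_of_real (sqrt (p s)) \<cdot>\<^sub>m (UL s * P0))"
proof -
  have U: "U \<in> carrier_mat N N" "adj U * U = 1\<^sub>m N" "U * adj U = 1\<^sub>m N"
    using U_unitary unfolding unitary_mat_def by auto
  have tU: "t_symmetric U" using t_symmetric_if_time_rev_commute[OF U(1) T_commute] .
  have "\<forall>s. \<exists>l::real. syndrome_sandwich U s = complex_of_real l \<cdot>\<^sub>m P0"
    unfolding syndrome_sandwich_def using P0_sandwich_scalar[OF U(1) tU t_symmetric_adj[OF U(1) tU U(2,3)]] by blast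
  then obtain p where p: "\<And>s. syndrome_sandwich U s = complex_of_real (p s) \<cdot>\<^sub>m P0" by metis
  define V where "V s = C s * syndrome_proj n m g s * U * P0" for s
  have V: "adj (V s) * V s = complex_of_real (p s) \<cdot>\<^sub>m P0" "P0 * V s = V s" "V s * P0 = V s"
    "V s \<in> carrier_mat N N" if "s \<in> syndromes m" for s
    using recovered_branch[of "C s" s U] recovery that U(1) p syndrome_proj_carrier
    unfolding V_def pauli_ops_def by auto
  have p_nonneg: "p s \<ge> 0" if s: "s \<in> syndromes m" for s
  proof -
    obtain r where r: "r \<ge> 0" "trace (adj (V s) * V s) = complex_of_real r"
      using trace_adj_mult_self_nonneg[OF V(4)[OF s]] by blast
    have "trace (adj (V s) * V s) = complex_of_real (2 * p s)"
      unfolding V(1)[OF s] using P0_carrier trace_P0 by (simp add: sq_tr_smult)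
    then have "r = 2 * p s" using r(2) by (simp only: of_real_eq_iff)
    then show ?thesis using r(1) by simp
  qed
  have "complex_of_real (\<Sum>s\<in>syndromes m. 2 * p s) = 2"
    using sum_trace_syndrome_sandwich[OF U(1,2)] P0_carrier trace_P0 by (simp add: p sq_tr_smult mult.commute)
  then have "(\<Sum>s\<in>syndromes m. 2 * p s) = 2" by (metis of_real_eq_iff of_real_numeral)
  then have p_sum: "(\<Sum>s\<in>syndromes m. p s) = 1" by (simp add: sum_distrib_left[symmetric])
  have "\<exists>W. unitary_on_code N P0 W \<and> V s = complex_of_real (sqrt (p s)) \<cdot>\<^sub>m (W * P0)"
    if "s \<in> syndromes m" for s
    using normalize_to_unitary_on_code[OF orth_proj_syndrome_proj V(4) p_nonneg V(1-3)] that by metis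
  then obtain UL where "\<And>s. s \<in> syndromes m \<Longrightarrow>
      unitary_on_code N P0 (UL s) \<and> V s = complex_of_real (sqrt (p s)) \<cdot>\<^sub>m (UL s * P0)" by metis
  then show ?thesis using p_nonneg p_sum unfolding V_def by blast
qed

end

theorem theorem1:
  fixes n :: nat
    and g :: "nat \<Rightarrow> complex mat"
    and C :: "bool list \<Rightarrow> complex mat"
    and U :: "complex mat"
  assumes n_pos: "n \<ge> 1"
    and gens: "stabilizer_generators n (n - 1) g"
    and recovery: "\<forall>s \<in> syndromes (n - 1).
        C s \<in> pauli_ops n \<and>
        syndrome_proj n (n - 1) g s * C s =
          C s * syndrome_proj n (n - 1) g (replicate (n - 1) False)"
    and U_unitary: "unitary_mat (2 ^ n) U"
    and even_weight: "\<forall>M \<in> stab_group n (n - 1) g. \<forall>c p.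
        c \<in> phases \<and> M = c \<cdot>\<^sub>m pauli_mat n p \<longrightarrow> even (pauli_weight n p)"
    and css: "is_css n (stab_group n (n - 1) g)"
    and dx_odd: "odd (dist_x n (stab_group n (n - 1) g))"
    and dz_odd: "odd (dist_z n (stab_group n (n - 1) g))"
    and T_commute: "\<forall>v \<in> carrier_vec (2 ^ n). U *\<^sub>v time_rev n v = time_rev n (U *\<^sub>v v)"
  shows "\<exists>p :: bool list \<Rightarrow> real. \<exists>UL :: bool list \<Rightarrow> complex mat.
     (\<forall>s \<in> syndromes (n - 1). p s \<ge> 0) \<and>
     (\<Sum>s \<in> syndromes (n - 1). p s) = 1 \<and>
     (\<forall>s \<in> syndromes (n - 1).
        unitary_on_code (2 ^ n) (syndrome_proj n (n - 1) g (replicate (n - 1) False)) (UL s) \<and>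
        C s * syndrome_proj n (n - 1) g s * U * syndrome_proj n (n - 1) g (replicate (n - 1) False) =
          complex_of_real (sqrt (p s)) \<cdot>\<^sub>m
            (UL s * syndrome_proj n (n - 1) g (replicate (n - 1) False)))"
proof -
  interpret even_css_code n "n - 1" g
    by unfold_locales (use n_pos gens even_weight css dx_odd dz_odd in auto)
  show ?thesis by (rule syndrome_decomposition[OF recovery U_unitary T_commute])
qed

end
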